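(* Let $L$ be a limit group over free products with set of elliptics $E_L$. (i) Let $u_1,u_2,u_3$ be nontrivial elements of $L$ such that at least one of them is not in $E_L$, and $[u_1,u_2]=1$, $[u_1,u_3]=1$. Then none of $u_1,u_2,u_3$ lies in $E_L$ and $[u_2,u_3]=1$. (ii) Let $A<L$ be a nontrivial abelian subgroup not contained in $E_L$. Then $A$ is contained in a unique maximal abelian subgroup of $L$, namely its centralizer $C(A)$, and $C(A)\cap E_L=\{1\}$. (iii) With $A$ as in (ii), $C(A)$ has index at most 2 in the normalizer $N(A)$; for every $\ell\in L\setminus N(A)$, $\ell C(A)\ell^{-1}\cap A=\{1\}$ (so $C(A)$ is almost malnormal); and if $[N(A):C(A)]=2$ then $N(A)$ is generated by $C(A)$ and an element of order 2 lying in $E_L$ that conjugates every element of $C(A)$ to its inverse.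
   Context: An element of a free product $A*B$ is elliptic if it lies in a conjugate of $A$ or of $B$. For a finitely generated group $G$ and groups $A_n,B_n$, a sequence of homomorphisms $h_n:G\to A_n*B_n$ is convergent if for every $g\in G$: either $h_n(g)=1$ for all large $n$ or $h_n(g)\ne1$ for all large $n$; and either $h_n(g)$ is elliptic for all large $n$ or non-elliptic for all large $n$. Its stable kernel is $K=\{g: h_n(g)=1\text{ for all large }n\}$; $L=G/K$ (with quotient $\eta$) is called a limit group over free products, and its set of elliptics is $E_L=\{\eta(g): h_n(g)\text{ elliptic for all large }n\}$. *)

theory Defs
  imports "HOL-Algebra.Algebra" "HOL-Library.Sublist"
begin

definition reduced_word :: "('b, 'm) monoid_scheme \<Rightarrow> 'b set \<Rightarrow> 'b set \<Rightarrow> 'b list \<Rightarrow> bool" where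
  "reduced_word P A B xs \<longleftrightarrow>
     (\<forall>x\<in>set xs. x \<in> (A \<union> B) \<and> x \<noteq> \<one>\<^bsub>P\<^esub>) \<and>
     (\<forall>i. Suc i < length xs \<longrightarrow>
        (xs ! i \<in> A \<and> xs ! Suc i \<in> B) \<or> (xs ! i \<in> B \<and> xs ! Suc i \<in> A))"

definition word_prod :: "('b, 'm) monoid_scheme \<Rightarrow> 'b list \<Rightarrow> 'b" where
  "word_prod P xs = foldr (\<lambda>x y. x \<otimes>\<^bsub>P\<^esub> y) xs \<one>\<^bsub>P\<^esub>"

definition is_free_product :: "('b, 'm) monoid_scheme \<Rightarrow> 'b set \<Rightarrow> 'b set \<Rightarrow> bool" where
  "is_free_product P A B \<longleftrightarrow>
     group P \<and> subgroup A P \<and> subgroup B P \<and>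
     generate P (A \<union> B) = carrier P \<and>
     (\<forall>xs. xs \<noteq> [] \<and> reduced_word P A B xs \<longrightarrow> word_prod P xs \<noteq> \<one>\<^bsub>P\<^esub>)"

definition elliptic :: "('b, 'm) monoid_scheme \<Rightarrow> 'b set \<Rightarrow> 'b set \<Rightarrow> 'b \<Rightarrow> bool" where
  "elliptic P A B x \<longleftrightarrow>
     (\<exists>p\<in>carrier P. \<exists>a\<in>A \<union> B. x = p \<otimes>\<^bsub>P\<^esub> a \<otimes>\<^bsub>P\<^esub> inv\<^bsub>P\<^esub> p)"

definition finitely_generated :: "('a, 'm) monoid_scheme \<Rightarrow> bool" where
  "finitely_generated G \<longleftrightarrow>
     (\<exists>S. finite S \<and> S \<subseteq> carrier G \<and> generate G S = carrier G)"

text \<open>A sequence h n : G \<rightarrow> A n * B n (realised as internal free products P n).\<close>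
definition convergent_seq ::
  "('a, 'm) monoid_scheme \<Rightarrow> (nat \<Rightarrow> ('b, 'k) monoid_scheme) \<Rightarrow> (nat \<Rightarrow> 'b set)
     \<Rightarrow> (nat \<Rightarrow> 'b set) \<Rightarrow> (nat \<Rightarrow> 'a \<Rightarrow> 'b) \<Rightarrow> bool" where
  "convergent_seq G P A B h \<longleftrightarrow>
     (\<forall>n. is_free_product (P n) (A n) (B n) \<and> h n \<in> hom G (P n)) \<and>
     (\<forall>g\<in>carrier G.
        ((\<forall>\<^sub>F n in sequentially. h n g = \<one>\<^bsub>P n\<^esub>) \<or>
         (\<forall>\<^sub>F n in sequentially. h n g \<noteq> \<one>\<^bsub>P n\<^esub>)) \<and>
        ((\<forall>\<^sub>F n in sequentially. elliptic (P n) (A n) (B n) (h n g)) \<or>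
         (\<forall>\<^sub>F n in sequentially. \<not> elliptic (P n) (A n) (B n) (h n g))))"

definition stable_kernel ::
  "('a, 'm) monoid_scheme \<Rightarrow> (nat \<Rightarrow> ('b, 'k) monoid_scheme) \<Rightarrow> (nat \<Rightarrow> 'a \<Rightarrow> 'b) \<Rightarrow> 'a set" where
  "stable_kernel G P h = {g \<in> carrier G. \<forall>\<^sub>F n in sequentially. h n g = \<one>\<^bsub>P n\<^esub>}"

definition limit_group ::
  "('a, 'm) monoid_scheme \<Rightarrow> (nat \<Rightarrow> ('b, 'k) monoid_scheme) \<Rightarrow> (nat \<Rightarrow> 'a \<Rightarrow> 'b) \<Rightarrow> 'a set monoid" where
  "limit_group G P h = G Mod (stable_kernel G P h)"

definition limit_elliptics ::
  "('a, 'm) monoid_scheme \<Rightarrow> (nat \<Rightarrow> ('b, 'k) monoid_scheme) \<Rightarrow> (nat \<Rightarrow> 'b set)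
     \<Rightarrow> (nat \<Rightarrow> 'b set) \<Rightarrow> (nat \<Rightarrow> 'a \<Rightarrow> 'b) \<Rightarrow> 'a set set" where
  "limit_elliptics G P A B h =
     {stable_kernel G P h #>\<^bsub>G\<^esub> g | g. g \<in> carrier G \<and>
        (\<forall>\<^sub>F n in sequentially. elliptic (P n) (A n) (B n) (h n g))}"

definition abelian_set :: "('c, 'm) monoid_scheme \<Rightarrow> 'c set \<Rightarrow> bool" where
  "abelian_set L S \<longleftrightarrow> (\<forall>x\<in>S. \<forall>y\<in>S. x \<otimes>\<^bsub>L\<^esub> y = y \<otimes>\<^bsub>L\<^esub> x)"

definition centralizer :: "('c, 'm) monoid_scheme \<Rightarrow> 'c set \<Rightarrow> 'c set" where
  "centralizer L S = {x \<in> carrier L. \<forall>a\<in>S. x \<otimes>\<^bsub>L\<^esub> a = a \<otimes>\<^bsub>L\<^esub> x}"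

definition max_abelian_subgroup :: "('c, 'm) monoid_scheme \<Rightarrow> 'c set \<Rightarrow> bool" where
  "max_abelian_subgroup L M \<longleftrightarrow> subgroup M L \<and> abelian_set L M \<and>
     (\<forall>M'. subgroup M' L \<and> abelian_set L M' \<and> M \<subseteq> M' \<longrightarrow> M' = M)"

definition commutator :: "('c, 'm) monoid_scheme \<Rightarrow> 'c \<Rightarrow> 'c \<Rightarrow> 'c" where
  "commutator L x y = x \<otimes>\<^bsub>L\<^esub> y \<otimes>\<^bsub>L\<^esub> inv\<^bsub>L\<^esub> x \<otimes>\<^bsub>L\<^esub> inv\<^bsub>L\<^esub> y"

end

theory Submission
  imports Defs
begin

text \<open>In \<open>P = A * B\<close> every element has a unique reduced normal form, and
    every non-elliptic element is conjugate to a cyclically reduced one.  For a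
    cyclically reduced \<open>c\<close> the ``translation length'' \<open>s \<mapsto> |s c\<^sup>M| - M |c|\<close> (for large \<open>M\<close>)
    is an injective homomorphism from the centralizer of \<open>c\<close> to \<open>\<int>\<close>.  These four facts are taken as axioms of a group with a set
    \<open>E\<close> of elliptic elements (locale \<open>elliptic_structure\<close>); parts (i)--(iii) of the
    theorem are derived from them by elementary group theory.
  \<^item> Limit groups.  Equations in the limit group \<open>L = G/K\<close> hold iff they hold
    eventually along the convergent sequence, so the four axioms pass from the free
    products \<open>P n\<close> to \<open>(L, E\<^sub>L)\<close> (locale \<open>convergent_limit\<close>).\<close>

text \<open>Lists whose consecutive entries alternate with respect to a predicate \<open>s\<close>;
  reduced words in a free product are exactly the alternating lists of letters.\<close>

fun alternating :: "('b \<Rightarrow> bool) \<Rightarrow> 'b list \<Rightarrow> bool" where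
  "alternating s [] = True"
| "alternating s [x] = True"
| "alternating s (x # y # xs) = (s x \<noteq> s y \<and> alternating s (y # xs))"

lemma alternating_Cons:
  "alternating s (x # xs) \<longleftrightarrow> alternating s xs \<and> (xs \<noteq> [] \<longrightarrow> s x \<noteq> s (hd xs))"
  by (cases xs) auto

lemma alternating_append:
  "alternating s (xs @ ys) \<longleftrightarrow> alternating s xs \<and> alternating s ys \<and>
     (xs \<noteq> [] \<longrightarrow> ys \<noteq> [] \<longrightarrow> s (last xs) \<noteq> s (hd ys))"
  by (induction xs) (auto simp: alternating_Cons)

lemma alternating_nth:
  "alternating s xs \<longleftrightarrow> (\<forall>i. Suc i < length xs \<longrightarrow> s (xs ! i) \<noteq> s (xs ! Suc i))"
proof (induction xs)
  case (Cons x xs)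
  have "(\<forall>i. Suc i < length (x # xs) \<longrightarrow> s ((x # xs) ! i) \<noteq> s ((x # xs) ! Suc i)) \<longleftrightarrow>
        (xs \<noteq> [] \<longrightarrow> s x \<noteq> s (hd xs)) \<and> (\<forall>i. Suc i < length xs \<longrightarrow> s (xs ! i) \<noteq> s (xs ! Suc i))"
    (is "?all \<longleftrightarrow> ?head \<and> ?tail")
  proof
    assume ?all
    then show "?head \<and> ?tail" using spec[OF \<open>?all\<close>, of 0] spec[OF \<open>?all\<close>, of "Suc _"]
      by (auto simp: hd_conv_nth)
  next
    assume "?head \<and> ?tail"
    then show ?all by (auto simp: hd_conv_nth nth_Cons split: nat.split)
  qed
  then show ?case using Cons.IH unfolding alternating_Cons by blast
qed simp

lemma alternating_rev: "alternating s (rev xs) = alternating s xs"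
  by (induction xs) (auto simp: alternating_append alternating_Cons hd_rev last_rev)

lemma commuting_prefix_is_power:
  "w @ cs = cs @ w \<Longrightarrow> length w = k * length cs \<Longrightarrow> w = concat (replicate k cs)"
proof (induction k arbitrary: w)
  case (Suc k)
  have "take (length cs) w = cs"
    using arg_cong[OF Suc.prems(1), of "take (length cs)"] Suc.prems(2) by simp
  then obtain w' where w: "w = cs @ w'" by (metis append_take_drop_id)
  then have "w' @ cs = cs @ w'" "length w' = k * length cs" using Suc.prems by auto
  then show ?case using Suc.IH w by simp
qed simp

context group
begin

lemma inv_cancel_simps:
  "x \<in> carrier G \<Longrightarrow> y \<in> carrier G \<Longrightarrow> inv x \<otimes> (x \<otimes> y) = y"
  "x \<in> carrier G \<Longrightarrow> y \<in> carrier G \<Longrightarrow> x \<otimes> (inv x \<otimes> y) = y"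
  by (simp_all flip: m_assoc)

lemma mult_inv_eq_one_iff: "x \<in> carrier G \<Longrightarrow> y \<in> carrier G \<Longrightarrow> x \<otimes> inv y = \<one> \<longleftrightarrow> x = y"
  using inv_solve_right'[of \<one> x y] by simp

definition conjugate :: "'a \<Rightarrow> 'a \<Rightarrow> 'a" where "conjugate w z = w \<otimes> z \<otimes> inv w"

lemma conjugate_closed[simp]: "w \<in> carrier G \<Longrightarrow> z \<in> carrier G \<Longrightarrow> conjugate w z \<in> carrier G"
  by (simp add: conjugate_def)

lemma conjugate_mult: "w \<in> carrier G \<Longrightarrow> a \<in> carrier G \<Longrightarrow> b \<in> carrier G \<Longrightarrow>
    conjugate w (a \<otimes> b) = conjugate w a \<otimes> conjugate w b"
  by (simp add: conjugate_def m_assoc inv_cancel_simps)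

lemma conjugate_inv: assumes "w \<in> carrier G" "a \<in> carrier G"
  shows "conjugate w (inv a) = inv (conjugate w a)"
proof -
  have "conjugate w (inv a) \<otimes> conjugate w a = \<one>"
    unfolding conjugate_def using assms by (simp add: m_assoc inv_cancel_simps)
  then show ?thesis using inv_equality assms by (simp add: conjugate_def)
qed

lemma conjugate_one[simp]: "w \<in> carrier G \<Longrightarrow> conjugate w \<one> = \<one>"
  by (simp add: conjugate_def)

lemma conjugate_cancel[simp]:
  "w \<in> carrier G \<Longrightarrow> a \<in> carrier G \<Longrightarrow> conjugate (inv w) (conjugate w a) = a"
  by (simp add: conjugate_def m_assoc inv_cancel_simps)

lemma conjugate_cancel'[simp]:
  "w \<in> carrier G \<Longrightarrow> a \<in> carrier G \<Longrightarrow> conjugate w (conjugate (inv w) a) = a"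
  by (simp add: conjugate_def m_assoc inv_cancel_simps)

lemma conjugate_inj: "w \<in> carrier G \<Longrightarrow> a \<in> carrier G \<Longrightarrow> b \<in> carrier G \<Longrightarrow>
    conjugate w a = conjugate w b \<longleftrightarrow> a = b"
  by (metis conjugate_cancel)

lemma conjugate_fixed_iff: assumes "w \<in> carrier G" "a \<in> carrier G"
  shows "conjugate w a = a \<longleftrightarrow> w \<otimes> a = a \<otimes> w"
  unfolding conjugate_def using inv_solve_right'[of a "w \<otimes> a" w] assms by simp

lemma conjugate_commute_iff: "w \<in> carrier G \<Longrightarrow> a \<in> carrier G \<Longrightarrow> b \<in> carrier G \<Longrightarrow>
   (conjugate w a \<otimes> conjugate w b = conjugate w b \<otimes> conjugate w a) \<longleftrightarrow> a \<otimes> b = b \<otimes> a"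
  by (simp add: conjugate_mult[symmetric] conjugate_inj)

lemma conjugate_conjugate: "w \<in> carrier G \<Longrightarrow> v \<in> carrier G \<Longrightarrow> a \<in> carrier G \<Longrightarrow>
    conjugate w (conjugate v a) = conjugate (w \<otimes> v) a"
  by (simp add: conjugate_def m_assoc inv_mult_group)

lemma conjugate_eq_one_iff: "w \<in> carrier G \<Longrightarrow> a \<in> carrier G \<Longrightarrow> conjugate w a = \<one> \<longleftrightarrow> a = \<one>"
  using conjugate_inj[of w a \<one>] by simp

lemma conjugate_nat_pow: "w \<in> carrier G \<Longrightarrow> a \<in> carrier G \<Longrightarrow>
    conjugate w (a [^] (n::nat)) = (conjugate w a) [^] n"
  by (induction n) (simp_all add: conjugate_mult)

lemma conjugate_int_pow: assumes "w \<in> carrier G" "a \<in> carrier G"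
  shows "conjugate w (a [^] (q::int)) = (conjugate w a) [^] q"
proof (cases q rule: int_cases2)
  case (nonneg n) then show ?thesis using assms conjugate_nat_pow by (simp add: int_pow_int)
next
  case (nonpos n) then show ?thesis
    using assms conjugate_nat_pow conjugate_inv by (simp add: int_pow_neg_int)
qed

text \<open>Conjugation by \<open>w\<inverse> y w\<close> is conjugation by \<open>y\<close> read in the coordinates \<open>x = w c w\<inverse>\<close>; used
  to reduce statements about a non-elliptic \<open>x\<close> to a cyclically reduced \<open>c\<close>.\<close>

lemma conjugate_shift: assumes "w \<in> carrier G" "y \<in> carrier G" "c \<in> carrier G"
  shows "conjugate (conjugate (inv w) y) c = conjugate (inv w) (conjugate y (conjugate w c))"
  using assms by (simp add: conjugate_def m_assoc inv_mult_group inv_cancel_simps)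

lemma conjugate_by_conjugate: "w \<in> carrier G \<Longrightarrow> a \<in> carrier G \<Longrightarrow> b \<in> carrier G \<Longrightarrow>
    conjugate (conjugate w a) (conjugate w b) = conjugate w (conjugate a b)"
  by (simp add: conjugate_def m_assoc inv_mult_group inv_cancel_simps)

lemma commutator_eq_one_iff: assumes "x \<in> carrier G" "y \<in> carrier G"
  shows "commutator G x y = \<one> \<longleftrightarrow> x \<otimes> y = y \<otimes> x"
proof -
  have "commutator G x y = (x \<otimes> y) \<otimes> inv (y \<otimes> x)"
    unfolding commutator_def using assms by (simp add: inv_mult_group m_assoc)
  then show ?thesis using mult_inv_eq_one_iff[of "x \<otimes> y" "y \<otimes> x"] assms by simp
qed

lemma normalizer_iff: assumes "H \<subseteq> carrier G"
  shows "l \<in> normalizer G H \<longleftrightarrow> l \<in> carrier G \<and> l <# H #> inv l = H"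
  unfolding normalizer_def stabilizer_def using assms by auto

lemma conjugate_set_image: assumes "H \<subseteq> carrier G" "l \<in> carrier G"
  shows "l <# H #> inv l = conjugate l ` H"
  unfolding l_coset_def r_coset_def conjugate_def by auto

end

locale free_product = group P for P :: "('b, 'm) monoid_scheme" (structure) +
  fixes A B
  assumes is_fp: "is_free_product P A B"
begin

lemma subgroup_A: "subgroup A P" and subgroup_B: "subgroup B P"
    and AB_generate: "generate P (A \<union> B) = carrier P"
    and reduced_word_nontrivial: "\<And>xs. xs \<noteq> [] \<Longrightarrow> reduced_word P A B xs \<Longrightarrow> word_prod P xs \<noteq> \<one>"
  using is_fp unfolding is_free_product_def by blast+

abbreviation wprod where "wprod \<equiv> word_prod P"

lemma wprod_Nil[simp]: "wprod [] = \<one>" and wprod_Cons[simp]: "wprod (x # xs) = x \<otimes> wprod xs"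
  by (simp_all add: word_prod_def)

lemma wprod_closed[simp]: "set xs \<subseteq> carrier P \<Longrightarrow> wprod xs \<in> carrier P"
  by (induction xs) auto

lemma wprod_append: "set xs \<subseteq> carrier P \<Longrightarrow> set ys \<subseteq> carrier P \<Longrightarrow>
    wprod (xs @ ys) = wprod xs \<otimes> wprod ys"
  by (induction xs) (auto simp: m_assoc)

lemma A_carrier: "x \<in> A \<Longrightarrow> x \<in> carrier P" using subgroup_A subgroup.subset by blast
lemma B_carrier: "x \<in> B \<Longrightarrow> x \<in> carrier P" using subgroup_B subgroup.subset by blast

text \<open>The factors intersect trivially: otherwise \<open>[x, x\<inverse>]\<close> would be a reduced word with
  trivial product.\<close>

lemma A_inter_B: assumes "x \<in> A" "x \<in> B" shows "x = \<one>"
proof (rule ccontr)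
  assume ne: "x \<noteq> \<one>"
  have xc: "x \<in> carrier P" using assms A_carrier by blast
  have "inv x \<in> B" "inv x \<noteq> \<one>" using subgroup.m_inv_closed[OF subgroup_B assms(2)] ne xc by auto
  then have "reduced_word P A B [x, inv x]"
    using assms ne unfolding reduced_word_def by (auto simp: less_Suc_eq)
  moreover have "wprod [x, inv x] = \<one>" using xc by simp
  ultimately show False using reduced_word_nontrivial by blast
qed

definition letter :: "'b \<Rightarrow> bool" where "letter x \<longleftrightarrow> x \<in> A \<union> B \<and> x \<noteq> \<one>"

definition reduced :: "'b list \<Rightarrow> bool" where
  "reduced xs \<longleftrightarrow> (\<forall>x\<in>set xs. letter x) \<and> alternating (\<lambda>x. x \<in> A) xs"

lemma reduced_word_iff: "reduced_word P A B xs \<longleftrightarrow> reduced xs"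
proof -
  have side: "letter u \<Longrightarrow> letter v \<Longrightarrow>
      ((u \<in> A \<and> v \<in> B) \<or> (u \<in> B \<and> v \<in> A)) \<longleftrightarrow> ((u \<in> A) \<noteq> (v \<in> A))" for u v
    unfolding letter_def using A_inter_B by blast
  have "(\<forall>i. Suc i < length xs \<longrightarrow> (xs ! i \<in> A \<and> xs ! Suc i \<in> B) \<or> (xs ! i \<in> B \<and> xs ! Suc i \<in> A))
      \<longleftrightarrow> (\<forall>i. Suc i < length xs \<longrightarrow> (xs ! i \<in> A) \<noteq> (xs ! Suc i \<in> A))"
    if "\<forall>x\<in>set xs. letter x"
    using side that by (meson Suc_lessD nth_mem)
  then show ?thesis unfolding reduced_word_def reduced_def alternating_nth letter_def by blast
qed

lemma letter_carrier: "letter x \<Longrightarrow> x \<in> carrier P"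
  unfolding letter_def using A_carrier B_carrier by blast

lemma reduced_Nil[simp]: "reduced []" by (simp add: reduced_def)

lemma reduced_Cons:
  "reduced (x # xs) \<longleftrightarrow> letter x \<and> reduced xs \<and> (xs \<noteq> [] \<longrightarrow> (x \<in> A) \<noteq> (hd xs \<in> A))"
  unfolding reduced_def by (auto simp: alternating_Cons)

lemma reduced_append:
  "reduced (xs @ ys) \<longleftrightarrow> reduced xs \<and> reduced ys \<and>
     (xs \<noteq> [] \<longrightarrow> ys \<noteq> [] \<longrightarrow> (last xs \<in> A) \<noteq> (hd ys \<in> A))"
  unfolding reduced_def alternating_append by auto

lemma reduced_carrier: "reduced xs \<Longrightarrow> set xs \<subseteq> carrier P"
  unfolding reduced_def using letter_carrier by blast

lemma letter_inv: "letter x \<Longrightarrow> letter (inv x) \<and> (inv x \<in> A \<longleftrightarrow> x \<in> A)"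
proof -
  assume l: "letter x"
  then have xc: "x \<in> carrier P" by (rule letter_carrier)
  have "inv x \<in> A \<longleftrightarrow> x \<in> A"
    using subgroup.m_inv_closed[OF subgroup_A, of x] subgroup.m_inv_closed[OF subgroup_A, of "inv x"]
      xc by auto
  moreover have "x \<in> B \<Longrightarrow> inv x \<in> B" using subgroup.m_inv_closed[OF subgroup_B, of x] by simp
  moreover have "inv x \<noteq> \<one>" using l xc unfolding letter_def by simp
  ultimately show ?thesis using l unfolding letter_def by blast
qed

lemma letter_mult: assumes "letter u" "letter v" "(u \<in> A) = (v \<in> A)" "u \<otimes> v \<noteq> \<one>"
  shows "letter (u \<otimes> v) \<and> (u \<otimes> v \<in> A) = (u \<in> A)"
proof (cases "u \<in> A")
  case True
  then have "u \<otimes> v \<in> A" using assms subgroup.m_closed[OF subgroup_A] by simp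
  then show ?thesis using True assms(4) unfolding letter_def by simp
next
  case False
  then have "u \<in> B" "v \<in> B" using assms unfolding letter_def by auto
  then have uv: "u \<otimes> v \<in> B" using subgroup.m_closed[OF subgroup_B] by simp
  then have "u \<otimes> v \<notin> A" using A_inter_B assms(4) by blast
  then show ?thesis using uv False assms(4) unfolding letter_def by simp
qed

definition inv_word :: "'b list \<Rightarrow> 'b list" where "inv_word xs = rev (map (\<lambda>x. inv x) xs)"

lemma inv_word_Nil[simp]: "inv_word [] = []" by (simp add: inv_word_def)
lemma inv_word_Cons: "inv_word (x # xs) = inv_word xs @ [inv x]" by (simp add: inv_word_def)
lemma length_inv_word[simp]: "length (inv_word xs) = length xs" by (simp add: inv_word_def)
lemma inv_word_Nil_iff[simp]: "inv_word xs = [] \<longleftrightarrow> xs = []" by (simp add: inv_word_def)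

lemma inv_word_carrier: "set xs \<subseteq> carrier P \<Longrightarrow> set (inv_word xs) \<subseteq> carrier P"
  by (auto simp: inv_word_def)

lemma wprod_inv_word: "set xs \<subseteq> carrier P \<Longrightarrow> wprod (inv_word xs) = inv (wprod xs)"
proof (induction xs)
  case (Cons x xs)
  then have xc: "x \<in> carrier P" and xsc: "set xs \<subseteq> carrier P" by auto
  have "wprod (inv_word (x # xs)) = wprod (inv_word xs) \<otimes> inv x"
    unfolding inv_word_Cons using wprod_append[OF inv_word_carrier[OF xsc], of "[inv x]"] xc by simp
  also have "\<dots> = inv (wprod (x # xs))" using Cons xc xsc by (simp add: inv_mult_group)
  finally show ?case .
qed simp

lemma reduced_inv_word: "reduced xs \<Longrightarrow> reduced (inv_word xs)"
proof -
  assume r: "reduced xs"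
  have "alternating (\<lambda>x. x \<in> A) (map (\<lambda>x. inv x) xs) = alternating (\<lambda>x. x \<in> A) xs"
    using r unfolding reduced_def
  proof (induction xs)
    case (Cons x xs)
    then show ?case using letter_inv by (cases xs) (auto simp: alternating_Cons)
  qed simp
  then show ?thesis
    using r letter_inv unfolding reduced_def inv_word_def by (simp add: alternating_rev)
qed

lemma last_inv_word: "xs \<noteq> [] \<Longrightarrow> last (inv_word xs) = inv (hd xs)"
  by (cases xs) (auto simp: inv_word_Cons)

lemma hd_inv_word: "xs \<noteq> [] \<Longrightarrow> hd (inv_word xs) = inv (last xs)"
  by (simp add: inv_word_def hd_rev last_map)

text \<open>Existence of normal forms: multiplying a reduced word from the left by an element
  of \<open>A \<union> B\<close> either prepends it, merges it into the first letter, or cancels the first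
  letter.\<close>

definition mult_letter :: "'b \<Rightarrow> 'b list \<Rightarrow> 'b list" where
  "mult_letter g ys = (if g = \<one> then ys else (case ys of [] \<Rightarrow> [g]
     | y # ys' \<Rightarrow> if (g \<in> A) \<noteq> (y \<in> A) then g # ys
                  else if g \<otimes> y = \<one> then ys' else (g \<otimes> y) # ys'))"

lemma mult_letter_reduced: assumes g: "g \<in> A \<union> B" and r: "reduced ys"
  shows "reduced (mult_letter g ys) \<and> wprod (mult_letter g ys) = g \<otimes> wprod ys"
proof -
  have gc: "g \<in> carrier P" using g A_carrier B_carrier by blast
  have yc: "set ys \<subseteq> carrier P" using r reduced_carrier by blast
  consider "g = \<one>" | "g \<noteq> \<one>" "ys = []"
    | y ys' where "g \<noteq> \<one>" "ys = y # ys'" "(g \<in> A) \<noteq> (y \<in> A)"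
    | y ys' where "g \<noteq> \<one>" "ys = y # ys'" "(g \<in> A) = (y \<in> A)" "g \<otimes> y = \<one>"
    | y ys' where "g \<noteq> \<one>" "ys = y # ys'" "(g \<in> A) = (y \<in> A)" "g \<otimes> y \<noteq> \<one>"
    by (cases ys) auto
  then show ?thesis
  proof cases
    case 1 then show ?thesis using r yc by (simp add: mult_letter_def)
  next
    case 2 then show ?thesis using g gc by (simp add: mult_letter_def reduced_Cons letter_def)
  next
    case (3 y ys') then show ?thesis
      using g r by (simp add: mult_letter_def reduced_Cons letter_def)
  next
    case (4 y ys')
    then have "wprod ys' = g \<otimes> (y \<otimes> wprod ys')" using gc yc by (simp flip: m_assoc)
    then show ?thesis using 4 r by (simp add: mult_letter_def reduced_Cons)
  next
    case (5 y ys')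
    have ly: "letter y" and rys': "reduced ys'" and sy: "ys' \<noteq> [] \<longrightarrow> (y \<in> A) \<noteq> (hd ys' \<in> A)"
      using r 5 by (auto simp: reduced_Cons)
    have "letter g" using g 5 unfolding letter_def by simp
    then have "letter (g \<otimes> y) \<and> (g \<otimes> y \<in> A) = (g \<in> A)" using letter_mult[OF _ ly] 5 by simp
    then have "reduced ((g \<otimes> y) # ys')" using rys' sy 5 by (simp add: reduced_Cons)
    moreover have "(g \<otimes> y) \<otimes> wprod ys' = g \<otimes> (y \<otimes> wprod ys')" using gc yc 5 by (simp add: m_assoc)
    ultimately show ?thesis using 5 by (simp add: mult_letter_def)
  qed
qed

definition mult_word :: "'b list \<Rightarrow> 'b list \<Rightarrow> 'b list" where
  "mult_word xs ys = foldr mult_letter xs ys"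

lemma mult_word_reduced: assumes "set xs \<subseteq> A \<union> B" "reduced ys"
  shows "reduced (mult_word xs ys) \<and> wprod (mult_word xs ys) = wprod xs \<otimes> wprod ys"
  using assms
proof (induction xs)
  case Nil then show ?case using reduced_carrier by (simp add: mult_word_def)
next
  case (Cons x xs)
  have "mult_word (x # xs) ys = mult_letter x (mult_word xs ys)" by (simp add: mult_word_def)
  moreover have "x \<in> carrier P" "set xs \<subseteq> carrier P" using Cons.prems A_carrier B_carrier by auto
  moreover have "set ys \<subseteq> carrier P" using Cons.prems reduced_carrier by auto
  ultimately show ?case
    using mult_letter_reduced[of x "mult_word xs ys"] Cons by (simp add: m_assoc)
qed

lemma normal_form_exists: assumes "x \<in> carrier P" shows "\<exists>xs. reduced xs \<and> wprod xs = x"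
proof -
  have "x \<in> generate P (A \<union> B)" using assms AB_generate by simp
  then show ?thesis
  proof (induction x rule: generate.induct)
    case one then show ?case by (intro exI[of _ "[]"]) simp
  next
    case (incl h) then show ?case
      using mult_letter_reduced[of h "[]"] A_carrier B_carrier
        by (intro exI[of _ "mult_letter h []"]) auto
  next
    case (inv h)
    then have "inv h \<in> A \<union> B" "inv h \<in> carrier P"
      using subgroup.m_inv_closed[OF subgroup_A] subgroup.m_inv_closed[OF subgroup_B]
        A_carrier B_carrier by blast+
    then show ?case
      using mult_letter_reduced[of "inv h" "[]"] by (intro exI[of _ "mult_letter (inv h) []"]) auto
  next
    case (eng h1 h2)
    then obtain xs1 xs2 where "reduced xs1" "wprod xs1 = h1" "reduced xs2" "wprod xs2 = h2" by blast
    moreover have "set xs1 \<subseteq> A \<union> B" using \<open>reduced xs1\<close> unfolding reduced_def letter_def by blast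
    ultimately show ?case using mult_word_reduced[of xs1 xs2] by blast
  qed
qed

text \<open>If two reduced words with different first letters \<open>x \<noteq> y\<close> had the same
  product, then \<open>xs\<inverse> \<cdot> (x\<inverse> y) \<cdot> ys\<close> (with \<open>x\<inverse> y\<close> a single letter or the two letters
  \<open>x\<inverse>, y\<close>) would be a nonempty reduced word with trivial product.\<close>

lemma reduced_different_heads:
  assumes rx: "reduced (x # xs)" and ry: "reduced (y # ys)" and xy: "x \<noteq> y"
  shows "x \<otimes> wprod xs \<noteq> y \<otimes> wprod ys"
proof
  assume eq: "x \<otimes> wprod xs = y \<otimes> wprod ys"
  have lx: "letter x" and rxs: "reduced xs" and sx: "xs \<noteq> [] \<longrightarrow> (x \<in> A) \<noteq> (hd xs \<in> A)"
    and ly: "letter y" and rys: "reduced ys" and sy: "ys \<noteq> [] \<longrightarrow> (y \<in> A) \<noteq> (hd ys \<in> A)"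
    using rx ry by (auto simp: reduced_Cons)
  have xc: "x \<in> carrier P" and yc: "y \<in> carrier P" using lx ly letter_carrier by auto
  have xsc: "set xs \<subseteq> carrier P" and ysc: "set ys \<subseteq> carrier P" using rxs rys reduced_carrier by auto
  have rix: "reduced (inv_word xs)" using rxs reduced_inv_word by blast
  have lix: "letter (inv x) \<and> (inv x \<in> A) = (x \<in> A)" using letter_inv[OF lx] by simp
  have trivial: "inv (wprod xs) \<otimes> (inv x \<otimes> (y \<otimes> wprod ys)) = \<one>"
  proof -
    have "inv (wprod xs) \<otimes> (inv x \<otimes> (y \<otimes> wprod ys)) = inv (x \<otimes> wprod xs) \<otimes> (y \<otimes> wprod ys)"
      using xc yc xsc ysc by (simp add: inv_mult_group m_assoc)
    then show ?thesis using eq yc ysc by simp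
  qed
  have junction: "xs \<noteq> [] \<Longrightarrow> (last (inv_word xs) \<in> A) = (hd xs \<in> A)"
    using letter_inv[of "hd xs"] rxs unfolding reduced_def by (simp add: last_inv_word)
  show False
  proof (cases "(x \<in> A) = (y \<in> A)")
    case True
    have "inv x \<otimes> y \<noteq> \<one>" using xy xc yc inv_solve_left'[of \<one> x y] by auto
    then have "letter (inv x \<otimes> y) \<and> (inv x \<otimes> y \<in> A) = (x \<in> A)"
      using letter_mult[of "inv x" y] lix ly True by simp
    then have "reduced (inv_word xs @ [inv x \<otimes> y] @ ys)"
      using rix rys sy True sx junction by (simp add: reduced_append reduced_Cons)
    moreover have "wprod (inv_word xs @ [inv x \<otimes> y] @ ys) = \<one>"
      using trivial rix rys reduced_carrier xc yc
        by (simp add: wprod_append wprod_inv_word[OF xsc] m_assoc)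
    ultimately show False using reduced_word_nontrivial reduced_word_iff by simp
  next
    case False
    have "reduced (inv_word xs @ [inv x, y] @ ys)"
      using rix rys lix ly sy False sx junction by (simp add: reduced_append reduced_Cons)
    moreover have "wprod (inv_word xs @ [inv x, y] @ ys) = \<one>"
      using trivial rix rys reduced_carrier xc yc
        by (simp add: wprod_append wprod_inv_word[OF xsc] m_assoc)
    ultimately show False using reduced_word_nontrivial reduced_word_iff by simp
  qed
qed

lemma normal_form_unique: "reduced xs \<Longrightarrow> reduced ys \<Longrightarrow> wprod xs = wprod ys \<Longrightarrow> xs = ys"
proof (induction xs arbitrary: ys)
  case Nil
  then show ?case using reduced_word_nontrivial[of ys] reduced_word_iff by auto
next
  case (Cons x xs)
  show ?case
  proof (cases ys)
    case Nil
    then show ?thesis using reduced_word_nontrivial[of "x # xs"] Cons.prems reduced_word_iff by simp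
  next
    case (Cons y ys')
    have "x = y"
      using reduced_different_heads \<open>reduced (x # xs)\<close> \<open>reduced ys\<close> Cons.prems(3) Cons by auto
    moreover have "reduced xs" "reduced ys'" "x \<in> carrier P"
      "set xs \<subseteq> carrier P" "set ys' \<subseteq> carrier P"
      using Cons.prems Cons reduced_carrier letter_carrier by (auto simp: reduced_Cons)
    ultimately show ?thesis using Cons.IH[of ys'] Cons.prems(3) Cons by simp
  qed
qed

definition nf :: "'b \<Rightarrow> 'b list" where "nf x = (THE xs. reduced xs \<and> wprod xs = x)"

lemma nf: assumes "x \<in> carrier P" shows "reduced (nf x)" "wprod (nf x) = x"
proof -
  obtain xs where xs: "reduced xs" "wprod xs = x" using normal_form_exists[OF assms] by blast
  have "reduced (nf x) \<and> wprod (nf x) = x"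
    unfolding nf_def
  proof (rule theI[of _ xs])
    show "reduced xs \<and> wprod xs = x" using xs by simp
    show "ys = xs" if "reduced ys \<and> wprod ys = x" for ys using that xs normal_form_unique by blast
  qed
  then show "reduced (nf x)" "wprod (nf x) = x" by auto
qed

lemma nf_eq: "reduced xs \<Longrightarrow> nf (wprod xs) = xs"
  using nf[of "wprod xs"] normal_form_unique reduced_carrier wprod_closed by metis

lemma nf_one[simp]: "nf \<one> = []"
  using nf_eq[of "[]"] by simp

lemma nf_inv: "x \<in> carrier P \<Longrightarrow> nf (inv x) = inv_word (nf x)"
  using nf_eq[OF reduced_inv_word[OF nf(1)]] wprod_inv_word[OF reduced_carrier[OF nf(1)]] nf(2)
    by metis

text \<open>An element is \<^emph>\<open>cyclically reduced\<close> if its normal form has length at least two and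
  begins and ends in different factors; then all its powers have normal form a
  repetition of its normal form.\<close>

definition cyc_reduced :: "'b \<Rightarrow> bool" where
  "cyc_reduced c \<longleftrightarrow> c \<in> carrier P \<and> length (nf c) \<ge> 2 \<and> (hd (nf c) \<in> A) \<noteq> (last (nf c) \<in> A)"

lemma short_nf_in_factor: assumes "x \<in> carrier P" "length (nf x) \<le> 1" shows "x \<in> A \<union> B"
proof (cases "nf x")
  case Nil then show ?thesis using nf(2)[OF assms(1)] subgroup.one_closed[OF subgroup_A] by auto
next
  case (Cons l ys)
  then have "nf x = [l]" using assms(2) by simp
  then show ?thesis
    using nf[OF assms(1)] letter_carrier[of l] by (auto simp: reduced_Cons letter_def)
qed

text \<open>If the normal form of \<open>x = x\<^sub>1 \<cdots> x\<^sub>n\<close> begins and ends in the same factor, conjugating by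
  \<open>x\<^sub>1\<inverse>\<close> gives \<open>x\<^sub>2 \<cdots> (x\<^sub>n x\<^sub>1)\<close>, which is shorter.\<close>

lemma shorten_by_conjugation:
  assumes xc: "x \<in> carrier P" and len: "length (nf x) \<ge> 2"
    and same: "(hd (nf x) \<in> A) = (last (nf x) \<in> A)"
  shows "\<exists>x1 x'. x1 \<in> carrier P \<and> x' \<in> carrier P \<and> x = x1 \<otimes> x' \<otimes> inv x1 \<and>
           length (nf x') < length (nf x)"
proof -
  obtain x1 mid xn where e: "nf x = x1 # mid @ [xn]"
  proof -
    obtain ys xn where ys: "nf x = ys @ [xn]" using len by (cases "nf x" rule: rev_cases) auto
    moreover obtain x1 mid where "ys = x1 # mid" using len ys by (cases ys) auto
    ultimately show ?thesis using that by simp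
  qed
  have "reduced ([x1] @ mid @ [xn])" using nf(1)[OF xc] e by simp
  then have l1: "letter x1" and ln: "letter xn" and rmid: "reduced mid"
    and junction: "mid \<noteq> [] \<longrightarrow> (last mid \<in> A) \<noteq> (xn \<in> A)"
    by (auto simp: reduced_append reduced_Cons)
  have x1c: "x1 \<in> carrier P" and xnc: "xn \<in> carrier P" using l1 ln letter_carrier by auto
  have midc: "set mid \<subseteq> carrier P" using rmid reduced_carrier by auto
  define x' where "x' = wprod mid \<otimes> (xn \<otimes> x1)"
  have x'c: "x' \<in> carrier P" unfolding x'_def using midc x1c xnc by simp
  have "x = x1 \<otimes> wprod mid \<otimes> xn"
    using nf(2)[OF xc] e x1c xnc midc by (simp add: wprod_append m_assoc)
  then have conj: "x = x1 \<otimes> x' \<otimes> inv x1" unfolding x'_def using midc x1c xnc by (simp add: m_assoc)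
  have "length (nf x') < length (nf x)"
  proof (cases "xn \<otimes> x1 = \<one>")
    case True
    then have "x' = wprod mid" unfolding x'_def using midc by simp
    then show ?thesis using nf_eq[OF rmid] e by simp
  next
    case False
    have "letter (xn \<otimes> x1) \<and> (xn \<otimes> x1 \<in> A) = (xn \<in> A)"
      using letter_mult[OF ln l1] same e False by simp
    then have "reduced (mid @ [xn \<otimes> x1])"
      using rmid junction by (simp add: reduced_append reduced_Cons)
    moreover have "wprod (mid @ [xn \<otimes> x1]) = x'"
      unfolding x'_def using midc x1c xnc by (simp add: wprod_append)
    ultimately have "nf x' = mid @ [xn \<otimes> x1]" using nf_eq by metis
    then show ?thesis using e by simp
  qed
  then show ?thesis using x1c x'c conj by blast
qed

lemma conjugate_letter_or_cyc_reduced: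
  "x \<in> carrier P \<Longrightarrow> \<exists>w\<in>carrier P. \<exists>c. x = w \<otimes> c \<otimes> inv w \<and> (c \<in> A \<union> B \<or> cyc_reduced c)"
proof (induction "length (nf x)" arbitrary: x rule: less_induct)
  case less
  consider "length (nf x) \<le> 1" | "cyc_reduced x"
    | "length (nf x) \<ge> 2" "(hd (nf x) \<in> A) = (last (nf x) \<in> A)"
    using less.prems unfolding cyc_reduced_def by linarith
  then show ?case
  proof cases
    case 1 then show ?thesis
      using short_nf_in_factor[OF less.prems] less.prems by (intro bexI[of _ \<one>] exI[of _ x]) auto
  next
    case 2 then show ?thesis using less.prems by (intro bexI[of _ \<one>] exI[of _ x]) auto
  next
    case 3
    then obtain x1 x' where x': "x1 \<in> carrier P" "x' \<in> carrier P" "x = x1 \<otimes> x' \<otimes> inv x1"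
      "length (nf x') < length (nf x)"
      using shorten_by_conjugation less.prems by blast
    then obtain w c where w: "w \<in> carrier P" "x' = w \<otimes> c \<otimes> inv w" "c \<in> A \<union> B \<or> cyc_reduced c"
      using less.hyps by blast
    have "c \<in> carrier P" using w(3) A_carrier B_carrier cyc_reduced_def by blast
    then have "x = (x1 \<otimes> w) \<otimes> c \<otimes> inv (x1 \<otimes> w)"
      using x' w by (simp add: m_assoc inv_mult_group)
    then show ?thesis using w x' by (intro bexI[of _ "x1 \<otimes> w"]) auto
  qed
qed

lemma strip_right_A: assumes "reduced xs" "xs \<noteq> [] \<longrightarrow> hd xs \<notin> A"
  shows "\<exists>\<beta> mid. \<beta> \<in> A \<and> reduced mid \<and> wprod xs = wprod mid \<otimes> \<beta> \<and>
           (mid \<noteq> [] \<longrightarrow> hd mid \<notin> A \<and> last mid \<notin> A)"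
proof (cases xs rule: rev_cases)
  case Nil then show ?thesis
    using subgroup.one_closed[OF subgroup_A] by (intro exI[of _ \<one>] exI[of _ "[]"]) auto
next
  case (snoc mid' xn)
  have rm: "reduced mid'" and ln: "letter xn" and j: "mid' \<noteq> [] \<longrightarrow> (last mid' \<in> A) \<noteq> (xn \<in> A)"
    using assms(1) snoc by (auto simp: reduced_append reduced_Cons)
  have mc: "set mid' \<subseteq> carrier P" using rm reduced_carrier by auto
  have xnc: "xn \<in> carrier P" using ln letter_carrier by auto
  show ?thesis
  proof (cases "xn \<in> A")
    case True
    have "wprod xs = wprod mid' \<otimes> xn" using snoc mc xnc by (simp add: wprod_append)
    moreover have "mid' \<noteq> [] \<longrightarrow> hd mid' \<notin> A" using assms(2) snoc by auto
    ultimately show ?thesis using True rm j by (intro exI[of _ xn] exI[of _ mid']) auto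
  next
    case False
    have "wprod xs = wprod xs \<otimes> \<one>" using assms(1) reduced_carrier by simp
    then show ?thesis using False assms snoc subgroup.one_closed[OF subgroup_A]
      by (intro exI[of _ \<one>] exI[of _ xs]) auto
  qed
qed

lemma strip_A: assumes "z \<in> carrier P"
  shows "\<exists>\<alpha> \<beta> mid. \<alpha> \<in> A \<and> \<beta> \<in> A \<and> reduced mid \<and> z = \<alpha> \<otimes> wprod mid \<otimes> \<beta> \<and>
           (mid \<noteq> [] \<longrightarrow> hd mid \<notin> A \<and> last mid \<notin> A)"
proof -
  have rz: "reduced (nf z)" and wz: "wprod (nf z) = z" using nf assms by auto
  obtain \<alpha> ys where a: "\<alpha> \<in> A" "reduced ys" "z = \<alpha> \<otimes> wprod ys" "ys \<noteq> [] \<longrightarrow> hd ys \<notin> A"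
  proof (cases "nf z")
    case Nil then show ?thesis using that[of \<one> "[]"] wz subgroup.one_closed[OF subgroup_A] by auto
  next
    case (Cons x1 ys)
    have x1c: "x1 \<in> carrier P" using rz Cons letter_carrier by (auto simp: reduced_Cons)
    have ysc: "set ys \<subseteq> carrier P" using rz Cons reduced_carrier by (auto simp: reduced_Cons)
    show ?thesis
    proof (cases "x1 \<in> A")
      case True then show ?thesis using that[of x1 ys] rz Cons wz by (auto simp: reduced_Cons)
    next
      case False then show ?thesis
        using that[of \<one> "nf z"] rz Cons wz assms subgroup.one_closed[OF subgroup_A] by auto
    qed
  qed
  obtain \<beta> mid where b: "\<beta> \<in> A" "reduced mid" "wprod ys = wprod mid \<otimes> \<beta>"
      "mid \<noteq> [] \<longrightarrow> hd mid \<notin> A \<and> last mid \<notin> A"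
    using strip_right_A[OF a(2) a(4)] by blast
  have "z = \<alpha> \<otimes> wprod mid \<otimes> \<beta>"
    using a(3) b(3) A_carrier[OF a(1)] A_carrier[OF b(1)] reduced_carrier[OF b(2)]
      by (simp add: m_assoc)
  then show ?thesis using a b by blast
qed

text \<open>A nonempty such \<open>m\<close> cannot absorb nontrivial elements of \<open>A\<close> on both sides, since
  \<open>[a\<^sub>1] @ mid @ [a\<^sub>2]\<close> is again reduced.\<close>

lemma A_sandwich_ne:
  assumes a12: "a1 \<in> A" "a1 \<noteq> \<one>" "a2 \<in> A" "a2 \<noteq> \<one>"
    and mid: "reduced mid" "mid \<noteq> []" "hd mid \<notin> A" "last mid \<notin> A"
  shows "a1 \<otimes> wprod mid \<otimes> a2 \<noteq> wprod mid"
proof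
  assume eq: "a1 \<otimes> wprod mid \<otimes> a2 = wprod mid"
  have "letter a1" "letter a2" using a12 unfolding letter_def by auto
  then have "reduced ([a1] @ mid @ [a2])" using mid a12 by (simp add: reduced_append reduced_Cons)
  moreover have "wprod ([a1] @ mid @ [a2]) = wprod mid"
    using eq a12 A_carrier reduced_carrier[OF mid(1)] by (simp add: wprod_append m_assoc)
  ultimately have "[a1] @ mid @ [a2] = mid" using normal_form_unique mid(1) by blast
  then show False using arg_cong[of _ _ length] by force
qed

lemma centralizer_in_A:
  assumes a: "a \<in> A" "a \<noteq> \<one>" and z: "z \<in> carrier P" and comm: "z \<otimes> a = a \<otimes> z"
  shows "z \<in> A"
proof -
  obtain \<alpha> \<beta> mid where s: "\<alpha> \<in> A" "\<beta> \<in> A" "reduced mid" "z = \<alpha> \<otimes> wprod mid \<otimes> \<beta>"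
    "mid \<noteq> [] \<longrightarrow> hd mid \<notin> A \<and> last mid \<notin> A"
    using strip_A[OF z] by blast
  have ac: "\<alpha> \<in> carrier P" "\<beta> \<in> carrier P" "a \<in> carrier P" using s A_carrier a by auto
  have mc: "wprod mid \<in> carrier P" using reduced_carrier[OF s(3)] by simp
  have "mid = []"
  proof (rule ccontr)
    assume ne: "mid \<noteq> []"
    define a1 where "a1 = inv \<alpha> \<otimes> a \<otimes> \<alpha>"
    define a2 where "a2 = \<beta> \<otimes> inv a \<otimes> inv \<beta>"
    have "a1 \<in> A" "a2 \<in> A" unfolding a1_def a2_def using s(1,2) a(1) subgroup_A
      by (meson subgroup.m_closed subgroup.m_inv_closed)+
    moreover have "a1 \<noteq> \<one>" "a2 \<noteq> \<one>" unfolding a1_def a2_def using a(2) ac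
      by (metis inv_closed m_closed inv_solve_left' r_one l_inv inv_inv)+
    moreover have "a1 \<otimes> wprod mid \<otimes> a2 = wprod mid"
    proof -
      have "a1 \<otimes> wprod mid \<otimes> a2 = inv \<alpha> \<otimes> (a \<otimes> z) \<otimes> (inv a \<otimes> inv \<beta>)"
        unfolding a1_def a2_def s(4) using ac mc by (simp add: m_assoc)
      also have "\<dots> = inv \<alpha> \<otimes> (z \<otimes> a) \<otimes> (inv a \<otimes> inv \<beta>)" using comm by simp
      also have "\<dots> = wprod mid" unfolding s(4) using ac mc by (simp add: m_assoc inv_cancel_simps)
      finally show ?thesis .
    qed
    ultimately show False using A_sandwich_ne s(3,5) ne by blast
  qed
  then show ?thesis using s ac subgroup.m_closed[OF subgroup_A] by simp
qed

lemma mult_letter_append: "q \<noteq> [] \<Longrightarrow> mult_letter u (q @ r) = mult_letter u q @ r"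
  by (cases q) (auto simp: mult_letter_def)

lemma mult_word_suffix:
  "length us < length vs \<Longrightarrow> \<exists>pre. mult_word us vs = pre @ drop (length us) vs"
proof (induction us)
  case (Cons u us)
  then obtain pre where p: "mult_word us vs = pre @ drop (length us) vs" by auto
  define rest where "rest = drop (Suc (length us)) vs"
  have "mult_word us vs = (pre @ [vs ! length us]) @ rest"
    using p Cons.prems by (simp add: rest_def Cons_nth_drop_Suc)
  then have "mult_word (u # us) vs = mult_letter u (pre @ [vs ! length us]) @ rest"
    using mult_letter_append[of "pre @ [vs ! length us]" u rest]
    by (simp add: mult_word_def del: append_assoc)
  then show ?case by (auto simp: rest_def)
qed (simp add: mult_word_def)

lemma nf_mult: "x \<in> carrier P \<Longrightarrow> y \<in> carrier P \<Longrightarrow> nf (x \<otimes> y) = mult_word (nf x) (nf y)"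
  using mult_word_reduced[of "nf x" "nf y"] nf nf_eq unfolding reduced_def letter_def
  by (metis subsetI)

lemma nf_mult_last:
  assumes "x \<in> carrier P" "y \<in> carrier P" "length (nf x) < length (nf y)"
  shows "nf (x \<otimes> y) \<noteq> [] \<and> last (nf (x \<otimes> y)) = last (nf y)"
proof -
  obtain pre where "mult_word (nf x) (nf y) = pre @ drop (length (nf x)) (nf y)"
    using mult_word_suffix[OF assms(3)] by blast
  moreover have "drop (length (nf x)) (nf y) \<noteq> []" using assms(3) by simp
  ultimately show ?thesis using nf_mult[OF assms(1,2)] by (simp add: last_drop)
qed

lemma nf_mult_hd:
  assumes x: "x \<in> carrier P" and y: "y \<in> carrier P" and shorter: "length (nf y) < length (nf x)"
  shows "nf (x \<otimes> y) \<noteq> [] \<and> hd (nf (x \<otimes> y)) = hd (nf x)"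
proof -
  have "nf (inv y \<otimes> inv x) \<noteq> [] \<and> last (nf (inv y \<otimes> inv x)) = last (nf (inv x))"
    using nf_mult_last[of "inv y" "inv x"] x y shorter nf_inv by simp
  moreover have ne: "nf x \<noteq> []" using shorter by auto
  moreover have "hd (nf x) \<in> carrier P" using ne reduced_carrier[OF nf(1)[OF x]] hd_in_set by blast
  moreover have "nf (x \<otimes> y) = inv_word (nf (inv y \<otimes> inv x))"
    using nf_inv[of "inv y \<otimes> inv x"] x y by (simp add: inv_mult_group)
  ultimately show ?thesis using x by (simp add: hd_inv_word last_inv_word nf_inv)
qed

text \<open>Powers of a cyclically reduced element: the normal form of \<open>c\<^sup>M\<close> is \<open>M\<close> copies of
  that of \<open>c\<close>, because the junctions between copies cause no cancellation.\<close>

definition word_pow :: "'b list \<Rightarrow> nat \<Rightarrow> 'b list" where "word_pow cs M = concat (replicate M cs)"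

lemma word_pow_Suc: "word_pow cs (Suc M) = cs @ word_pow cs M" by (simp add: word_pow_def)
lemma word_pow_Suc2: "word_pow cs (Suc M) = word_pow cs M @ cs"
  by (simp add: word_pow_def replicate_append_same[symmetric])
lemma length_word_pow[simp]: "length (word_pow cs M) = M * length cs"
  by (simp add: word_pow_def length_concat sum_list_replicate)

lemma cyc_reduced_nf: "cyc_reduced c \<Longrightarrow>
    reduced (nf c) \<and> nf c \<noteq> [] \<and> (hd (nf c) \<in> A) \<noteq> (last (nf c) \<in> A) \<and> length (nf c) \<ge> 2"
  unfolding cyc_reduced_def using nf by auto

lemma hd_word_pow: "M > 0 \<Longrightarrow> cs \<noteq> [] \<Longrightarrow> hd (word_pow cs M) = hd cs"
  by (cases M) (auto simp: word_pow_Suc)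
lemma last_word_pow: "M > 0 \<Longrightarrow> cs \<noteq> [] \<Longrightarrow> last (word_pow cs M) = last cs"
  by (cases M) (auto simp: word_pow_Suc2)

lemma reduced_word_pow: assumes "cyc_reduced c"
  shows "reduced (word_pow (nf c) M) \<and> wprod (word_pow (nf c) M) = c [^] M"
proof (induction M)
  case 0 then show ?case by (simp add: word_pow_def)
next
  case (Suc M)
  have h: "reduced (nf c) \<and> nf c \<noteq> [] \<and> (hd (nf c) \<in> A) \<noteq> (last (nf c) \<in> A)"
    using cyc_reduced_nf[OF assms] by auto
  have cc: "c \<in> carrier P" using assms cyc_reduced_def by auto
  have "reduced (word_pow (nf c) M @ nf c)"
    using Suc h by (cases "M = 0") (simp add: word_pow_def, simp add: reduced_append last_word_pow)
  moreover have "wprod (word_pow (nf c) M @ nf c) = c [^] Suc M"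
    using Suc h reduced_carrier[of "nf c"] reduced_carrier[of "word_pow (nf c) M"] nf(2)[OF cc]
    by (simp add: wprod_append)
  ultimately show ?case by (simp add: word_pow_Suc2)
qed

lemma nf_pow_cyc_reduced: "cyc_reduced c \<Longrightarrow> nf (c [^] M) = word_pow (nf c) M"
  using reduced_word_pow nf_eq by metis

text \<open>For cyclically reduced \<open>c\<close> and any \<open>s\<close>, once \<open>M\<close> exceeds
  \<open>stable_exp s\<close> the normal form of \<open>s c\<^sup>M\<close> grows by exactly \<open>nf c\<close> with each further factor
  \<open>c\<close>, so \<open>tlen c s = |s c\<^sup>M| - M |c|\<close> does not depend on \<open>M\<close>.  On the centralizer \<open>cent c\<close>
  it is an injective homomorphism to \<open>\<int>\<close>; hence \<open>cent c\<close> is infinite cyclic.\<close>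

definition stable_exp :: "'b \<Rightarrow> nat" where "stable_exp s = Suc (length (nf s))"

definition tlen :: "'b \<Rightarrow> 'b \<Rightarrow> int" where
  "tlen c s = int (length (nf (s \<otimes> c [^] stable_exp s))) - int (stable_exp s * length (nf c))"

abbreviation cent :: "'b \<Rightarrow> 'b set" where "cent x \<equiv> centralizer P {x}"

lemma cent_eq: "cent x = {s \<in> carrier P. s \<otimes> x = x \<otimes> s}"
  unfolding centralizer_def by auto

lemma cyc_reduced_carrier: "cyc_reduced c \<Longrightarrow> c \<in> carrier P" unfolding cyc_reduced_def by simp

lemma stable_exp_bound: assumes "cyc_reduced c" "M \<ge> stable_exp s"
  shows "length (nf s) < M * length (nf c)"
proof -
  have "length (nf c) \<ge> 2" using cyc_reduced_nf[OF assms(1)] by simp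
  then have "M * 1 \<le> M * length (nf c)" by (intro mult_le_mono2) simp
  then have "M \<le> M * length (nf c)" by simp
  then show ?thesis using assms(2) unfolding stable_exp_def by linarith
qed

lemma nf_mult_pow_last:
  assumes cr: "cyc_reduced c" and s: "s \<in> carrier P" and M: "M \<ge> stable_exp s"
  shows "nf (s \<otimes> c [^] M) \<noteq> [] \<and> last (nf (s \<otimes> c [^] M)) = last (nf c)"
proof -
  have "M > 0" using M unfolding stable_exp_def by simp
  then show ?thesis
    using nf_mult_last[OF s nat_pow_closed[OF cyc_reduced_carrier[OF cr]]] stable_exp_bound[OF cr M]
      nf_pow_cyc_reduced[OF cr] last_word_pow cyc_reduced_nf[OF cr] by simp
qed

lemma nf_pow_mult_hd:
  assumes cr: "cyc_reduced c" and s: "s \<in> carrier P" and M: "M \<ge> stable_exp s"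
  shows "nf (c [^] M \<otimes> s) \<noteq> [] \<and> hd (nf (c [^] M \<otimes> s)) = hd (nf c)"
proof -
  have "M > 0" using M unfolding stable_exp_def by simp
  then show ?thesis
    using nf_mult_hd[OF nat_pow_closed[OF cyc_reduced_carrier[OF cr]] s] stable_exp_bound[OF cr M]
      nf_pow_cyc_reduced[OF cr] hd_word_pow cyc_reduced_nf[OF cr] by simp
qed

lemma nf_mult_pow_Suc: assumes cr: "cyc_reduced c" and s: "s \<in> carrier P" and M: "M \<ge> stable_exp s"
  shows "nf (s \<otimes> c [^] Suc M) = nf (s \<otimes> c [^] M) @ nf c"
proof -
  have cc: "c \<in> carrier P" using cr cyc_reduced_carrier by simp
  have sc: "s \<otimes> c [^] M \<in> carrier P" using s cc by simp
  have h: "reduced (nf c) \<and> nf c \<noteq> [] \<and> (hd (nf c) \<in> A) \<noteq> (last (nf c) \<in> A)"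
    using cyc_reduced_nf[OF cr] by auto
  have "reduced (nf (s \<otimes> c [^] M) @ nf c)"
    using nf_mult_pow_last[OF cr s M] h nf(1)[OF sc] by (simp add: reduced_append)
  moreover have "wprod (nf (s \<otimes> c [^] M) @ nf c) = s \<otimes> c [^] Suc M"
    using nf[OF sc] nf[OF cc] reduced_carrier s cc by (simp add: wprod_append m_assoc)
  ultimately show ?thesis using nf_eq by metis
qed

lemma length_nf_mult_pow:
  assumes cr: "cyc_reduced c" and s: "s \<in> carrier P" and M: "M \<ge> stable_exp s"
  shows "length (nf (s \<otimes> c [^] M)) =
           length (nf (s \<otimes> c [^] stable_exp s)) + (M - stable_exp s) * length (nf c)"
  using M
proof (induction M rule: dec_induct)
  case base then show ?case by simp
next
  case (step n)
  then show ?case using nf_mult_pow_Suc[OF cr s, of n] by (simp add: Suc_diff_le)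
qed

lemma tlen_eq: assumes cr: "cyc_reduced c" and s: "s \<in> carrier P" and M: "M \<ge> stable_exp s"
  shows "tlen c s = int (length (nf (s \<otimes> c [^] M))) - int (M * length (nf c))"
proof -
  have "int ((M - stable_exp s) * length (nf c)) =
      int (M * length (nf c)) - int (stable_exp s * length (nf c))"
    using M by (simp add: diff_mult_distrib of_nat_diff)
  then show ?thesis unfolding tlen_def length_nf_mult_pow[OF assms] by simp
qed

lemma cent_nat_pow_commute: assumes "s \<in> cent x" "x \<in> carrier P"
  shows "s \<otimes> x [^] (M::nat) = x [^] M \<otimes> s"
proof (induction M)
  case 0 then show ?case using assms by (simp add: cent_eq)
next
  case (Suc M)
  have sc: "s \<in> carrier P" and sx: "s \<otimes> x = x \<otimes> s" using assms by (auto simp: cent_eq)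
  have "s \<otimes> x [^] Suc M = (s \<otimes> x [^] M) \<otimes> x" using sc assms(2) by (simp add: m_assoc)
  also have "\<dots> = x [^] M \<otimes> (s \<otimes> x)" using Suc sc assms(2) by (simp add: m_assoc)
  also have "\<dots> = x [^] Suc M \<otimes> s" using sx sc assms(2) by (simp add: m_assoc)
  finally show ?case .
qed

lemma cent_nf_mult_pow_hd:
  assumes cr: "cyc_reduced c" and s: "s \<in> cent c" and M: "M \<ge> stable_exp s"
  shows "nf (s \<otimes> c [^] M) \<noteq> [] \<and> hd (nf (s \<otimes> c [^] M)) = hd (nf c)"
  using nf_pow_mult_hd[OF cr _ M] cent_nat_pow_commute[OF s cyc_reduced_carrier[OF cr]] s
  by (simp add: cent_eq)

lemma cent_one: "\<one> \<in> cent x" if "x \<in> carrier P" using that by (simp add: cent_eq)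
lemma cent_mult: assumes "s1 \<in> cent x" "s2 \<in> cent x" "x \<in> carrier P"
  shows "s1 \<otimes> s2 \<in> cent x"
proof -
  have c: "s1 \<in> carrier P" "s2 \<in> carrier P" using assms by (auto simp: cent_eq)
  have e1: "s1 \<otimes> x = x \<otimes> s1" and e2: "s2 \<otimes> x = x \<otimes> s2" using assms by (auto simp: cent_eq)
  have "s1 \<otimes> s2 \<otimes> x = s1 \<otimes> (s2 \<otimes> x)" using c assms by (simp add: m_assoc)
  also have "\<dots> = s1 \<otimes> (x \<otimes> s2)" using e2 by simp
  also have "\<dots> = (s1 \<otimes> x) \<otimes> s2" using c assms by (simp add: m_assoc)
  also have "\<dots> = (x \<otimes> s1) \<otimes> s2" using e1 by simp
  also have "\<dots> = x \<otimes> (s1 \<otimes> s2)" using c assms by (simp add: m_assoc)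
  finally show ?thesis using c by (simp add: cent_eq)
qed

lemma cent_inv: assumes "s \<in> cent x" "x \<in> carrier P" shows "inv s \<in> cent x"
proof -
  have c: "s \<in> carrier P" using assms by (auto simp: cent_eq)
  have e: "s \<otimes> x = x \<otimes> s" using assms by (auto simp: cent_eq)
  have "x \<otimes> inv s = inv s \<otimes> (s \<otimes> x) \<otimes> inv s" using c assms by (simp add: m_assoc inv_cancel_simps)
  also have "\<dots> = inv s \<otimes> (x \<otimes> s) \<otimes> inv s" using e by simp
  also have "\<dots> = inv s \<otimes> x" using c assms by (simp add: m_assoc)
  finally show ?thesis using c by (simp add: cent_eq)
qed

lemma cent_carrier: "s \<in> cent x \<Longrightarrow> s \<in> carrier P" by (simp add: cent_eq)

text \<open>For \<open>s\<^sub>1, s\<^sub>2\<close> commuting with \<open>c\<close>, the normal forms of \<open>s\<^sub>1 c\<^sup>M\<close> and \<open>s\<^sub>2 c\<^sup>M\<close> concatenate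
  without cancellation to that of \<open>s\<^sub>1 s\<^sub>2 c\<^sup>2\<^sup>M\<close>, so \<open>tlen c\<close> is additive.\<close>

lemma tlen_mult: assumes cr: "cyc_reduced c" and s1: "s1 \<in> cent c" and s2: "s2 \<in> cent c"
  shows "tlen c (s1 \<otimes> s2) = tlen c s1 + tlen c s2"
proof -
  have cc: "c \<in> carrier P" using cr cyc_reduced_carrier by simp
  have sc: "s1 \<in> carrier P" "s2 \<in> carrier P" using s1 s2 cent_carrier by auto
  define M where "M = stable_exp s1 + stable_exp s2 + stable_exp (s1 \<otimes> s2)"
  have M1: "M \<ge> stable_exp s1" and M2: "M \<ge> stable_exp s2" and M12: "M + M \<ge> stable_exp (s1 \<otimes> s2)"
    unfolding M_def by auto
  define w1 where "w1 = nf (s1 \<otimes> c [^] M)"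
  define w2 where "w2 = nf (s2 \<otimes> c [^] M)"
  have p1: "s1 \<otimes> c [^] M \<in> carrier P" and p2: "s2 \<otimes> c [^] M \<in> carrier P" using sc cc by auto
  have h: "reduced (nf c) \<and> nf c \<noteq> [] \<and> (hd (nf c) \<in> A) \<noteq> (last (nf c) \<in> A)"
    using cyc_reduced_nf[OF cr] by auto
  have "reduced (w1 @ w2)"
    unfolding w1_def w2_def
    using nf_mult_pow_last[OF cr sc(1) M1] cent_nf_mult_pow_hd[OF cr s2 M2] h nf(1)[OF p1]
      nf(1)[OF p2] by (simp add: reduced_append)
  moreover have "wprod (w1 @ w2) = (s1 \<otimes> s2) \<otimes> c [^] (M + M)"
  proof -
    have "wprod (w1 @ w2) = (s1 \<otimes> c [^] M) \<otimes> (s2 \<otimes> c [^] M)"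
      unfolding w1_def w2_def using nf[OF p1] nf[OF p2] reduced_carrier by (simp add: wprod_append)
    also have "\<dots> = s1 \<otimes> (c [^] M \<otimes> s2) \<otimes> c [^] M" using sc cc by (simp add: m_assoc)
    also have "\<dots> = s1 \<otimes> (s2 \<otimes> c [^] M) \<otimes> c [^] M" using cent_nat_pow_commute[OF s2 cc] by simp
    also have "\<dots> = (s1 \<otimes> s2) \<otimes> (c [^] M \<otimes> c [^] M)" using sc cc by (simp add: m_assoc)
    also have "\<dots> = (s1 \<otimes> s2) \<otimes> c [^] (M + M)" using cc by (simp add: nat_pow_mult)
    finally show ?thesis .
  qed
  ultimately have "nf ((s1 \<otimes> s2) \<otimes> c [^] (M + M)) = w1 @ w2" using nf_eq by metis
  then have "tlen c (s1 \<otimes> s2) = int (length w1 + length w2) - int ((M + M) * length (nf c))"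
    using tlen_eq[OF cr _ M12] sc by simp
  moreover have "tlen c s1 = int (length w1) - int (M * length (nf c))" unfolding w1_def
    using tlen_eq[OF cr sc(1) M1] .
  moreover have "tlen c s2 = int (length w2) - int (M * length (nf c))" unfolding w2_def
    using tlen_eq[OF cr sc(2) M2] .
  ultimately show ?thesis by (simp add: add_mult_distrib)
qed

lemma tlen_one: assumes cr: "cyc_reduced c" shows "tlen c \<one> = 0"
proof -
  have cc: "c \<in> carrier P" using cr cyc_reduced_carrier by simp
  show ?thesis using tlen_eq[OF cr one_closed order_refl] nf_pow_cyc_reduced[OF cr] cc by simp
qed

lemma tlen_inv: assumes cr: "cyc_reduced c" and s: "s \<in> cent c" shows "tlen c (inv s) = - tlen c s"
proof -
  have cc: "c \<in> carrier P" using cr cyc_reduced_carrier by simp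
  have "tlen c (s \<otimes> inv s) = tlen c s + tlen c (inv s)" using tlen_mult[OF cr s cent_inv[OF s cc]] .
  then show ?thesis using tlen_one[OF cr] s cent_carrier by simp
qed

lemma tlen_self: assumes cr: "cyc_reduced c" shows "tlen c c = int (length (nf c))"
proof -
  have cc: "c \<in> carrier P" using cr cyc_reduced_carrier by simp
  have "c \<otimes> c [^] stable_exp c = c [^] Suc (stable_exp c)" by (rule nat_pow_Suc2[OF cc, symmetric])
  then show ?thesis
    using tlen_eq[OF cr cc order_refl] nf_pow_cyc_reduced[OF cr, of "Suc (stable_exp c)"]
    by (simp add: word_pow_Suc algebra_simps)
qed

lemma self_cent: "x \<in> carrier P \<Longrightarrow> x \<in> cent x" by (simp add: cent_eq)

text \<open>Injectivity: if \<open>tlen c s = 0\<close>, the normal form \<open>w\<close> of \<open>s c\<^sup>M\<close> has length \<open>M |c|\<close> and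
  commutes with \<open>nf c\<close> as a word, hence \<open>w = (nf c)\<^sup>M\<close> and \<open>s = 1\<close>.\<close>

lemma tlen_eq_zero: assumes cr: "cyc_reduced c" and s: "s \<in> cent c" and t0: "tlen c s = 0"
  shows "s = \<one>"
proof -
  have cc: "c \<in> carrier P" using cr cyc_reduced_carrier by simp
  have sc: "s \<in> carrier P" using s cent_carrier by simp
  define M where "M = stable_exp s"
  define w where "w = nf (s \<otimes> c [^] M)"
  have p: "s \<otimes> c [^] M \<in> carrier P" using sc cc by simp
  have "tlen c s = int (length w) - int (M * length (nf c))"
    using tlen_eq[OF cr sc, of M] unfolding w_def M_def by simp
  then have "int (length w) = int (M * length (nf c))" using t0 by simp
  then have lw: "length w = M * length (nf c)" by (simp only: of_nat_eq_iff)
  have h: "reduced (nf c) \<and> nf c \<noteq> [] \<and> (hd (nf c) \<in> A) \<noteq> (last (nf c) \<in> A)"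
    using cyc_reduced_nf[OF cr] by auto
  have l: "w \<noteq> [] \<and> last w = last (nf c)" unfolding w_def M_def
    using nf_mult_pow_last[OF cr sc order_refl] .
  have hh: "hd w = hd (nf c)" unfolding w_def M_def
    using cent_nf_mult_pow_hd[OF cr s order_refl] by simp
  have rw: "reduced w" unfolding w_def using nf(1)[OF p] .
  have "reduced (w @ nf c)" using rw h l by (simp add: reduced_append)
  moreover have "reduced (nf c @ w)" using rw h l hh by (simp add: reduced_append)
  moreover have "wprod (w @ nf c) = wprod (nf c @ w)"
  proof -
    have "wprod (w @ nf c) = s \<otimes> c [^] M \<otimes> c" unfolding w_def
      using nf[OF p] nf[OF cc] reduced_carrier by (simp add: wprod_append)
    also have "\<dots> = s \<otimes> c [^] Suc M" using sc cc by (simp add: m_assoc)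
    also have "\<dots> = s \<otimes> (c \<otimes> c [^] M)" using nat_pow_Suc2[OF cc, of M] by simp
    also have "\<dots> = c \<otimes> (s \<otimes> c [^] M)" using s sc cc by (simp add: cent_eq flip: m_assoc)
    also have "\<dots> = wprod (nf c @ w)" unfolding w_def
      using nf[OF p] nf[OF cc] reduced_carrier by (simp add: wprod_append)
    finally show ?thesis .
  qed
  ultimately have "w @ nf c = nf c @ w" using normal_form_unique by blast
  then have "w = word_pow (nf c) M"
    using commuting_prefix_is_power lw unfolding word_pow_def by blast
  then have "s \<otimes> c [^] M = c [^] M"
    using nf(2)[OF p] reduced_word_pow[OF cr] unfolding w_def by metis
  then show ?thesis using sc cc by simp
qed

lemma tlen_nat_pow: assumes cr: "cyc_reduced c" and s: "s \<in> cent c"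
  shows "s [^] (n::nat) \<in> cent c \<and> tlen c (s [^] n) = int n * tlen c s"
proof (induction n)
  case 0 then show ?case using tlen_one[OF cr] cent_one cyc_reduced_carrier[OF cr] by simp
next
  case (Suc n)
  have cc: "c \<in> carrier P" using cr cyc_reduced_carrier by simp
  have "s [^] Suc n = s [^] n \<otimes> s" by simp
  then show ?case using Suc tlen_mult[OF cr _ s, of "s [^] n"] cent_mult[OF _ s cc, of "s [^] n"]
    by (simp add: algebra_simps)
qed

lemma tlen_int_pow: assumes cr: "cyc_reduced c" and s: "s \<in> cent c"
  shows "s [^] (q::int) \<in> cent c \<and> tlen c (s [^] q) = q * tlen c s"
proof (cases q rule: int_cases2)
  case (nonneg n)
  then show ?thesis using tlen_nat_pow[OF cr s, of n] by (simp add: int_pow_int)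
next
  case (nonpos n)
  have sc: "s \<in> carrier P" using s cent_carrier by simp
  have cc: "c \<in> carrier P" using cr cyc_reduced_carrier by simp
  have "s [^] q = inv (s [^] n)" using nonpos sc by (simp add: int_pow_neg_int)
  then show ?thesis
    using tlen_nat_pow[OF cr s, of n] tlen_inv[OF cr, of "s [^] n"] cent_inv[OF _ cc, of "s [^] n"]
      nonpos by simp
qed

text \<open>The image of \<open>tlen c\<close> is a nonzero subgroup of \<open>\<int>\<close>; an element \<open>t\<close> of least positive
  translation length generates \<open>cent c\<close>.\<close>

lemma tlen_least_generates:
  assumes cr: "cyc_reduced c" and t: "t \<in> cent c" "tlen c t > 0"
    and least: "\<And>s. s \<in> cent c \<Longrightarrow> tlen c s > 0 \<Longrightarrow> tlen c t \<le> tlen c s"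
    and s: "s \<in> cent c"
  shows "\<exists>q. s = t [^] (q::int) \<and> tlen c s = q * tlen c t"
proof -
  have cc: "c \<in> carrier P" using cr cyc_reduced_carrier by simp
  define q where "q = tlen c s div tlen c t"
  define r where "r = tlen c s mod tlen c t"
  have r: "0 \<le> r" "r < tlen c t" unfolding r_def using t(2) by auto
  have tq: "t [^] q \<in> cent c" "tlen c (t [^] q) = q * tlen c t"
    using tlen_int_pow[OF cr t(1)] by auto
  have rest: "s \<otimes> inv (t [^] q) \<in> cent c" using cent_mult[OF s cent_inv[OF tq(1) cc] cc] .
  have remainder: "tlen c (s \<otimes> inv (t [^] q)) = r"
    using tlen_mult[OF cr s cent_inv[OF tq(1) cc]] tlen_inv[OF cr tq(1)] tq(2)
    unfolding r_def q_def by (simp add: minus_div_mult_eq_mod)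
  have "tlen c t \<le> r" if "r > 0" using least[OF rest] remainder that by simp
  then have "r = 0" using r by linarith
  then have "s \<otimes> inv (t [^] q) = \<one>" using tlen_eq_zero[OF cr rest] remainder by simp
  then have "s = t [^] q" using mult_inv_eq_one_iff[of s "t [^] q"] s tq cent_carrier by simp
  then show ?thesis using tq(2) by auto
qed

lemma tlen_generator: assumes cr: "cyc_reduced c"
  shows "\<exists>t\<in>cent c. tlen c t > 0 \<and>
           (\<forall>s\<in>cent c. \<exists>q. s = t [^] (q::int) \<and> tlen c s = q * tlen c t)"
proof -
  have cc: "c \<in> carrier P" using cr cyc_reduced_carrier by simp
  define T where "T = {n::nat. n > 0 \<and> (\<exists>s\<in>cent c. tlen c s = int n)}"
  have "length (nf c) \<in> T" unfolding T_def
    using tlen_self[OF cr] self_cent[OF cc] cyc_reduced_nf[OF cr] by auto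
  then have "(LEAST n. n \<in> T) \<in> T" by (rule LeastI)
  then obtain t where t: "t \<in> cent c" "tlen c t = int (LEAST n. n \<in> T)" "tlen c t > 0"
    unfolding T_def by auto
  have "tlen c t \<le> tlen c s" if "s \<in> cent c" "tlen c s > 0" for s
  proof -
    have "nat (tlen c s) \<in> T" unfolding T_def using that by auto
    then have "(LEAST n. n \<in> T) \<le> nat (tlen c s)" by (rule Least_le)
    then show ?thesis using t(2) that by (simp add: le_nat_iff)
  qed
  then show ?thesis using tlen_least_generates[OF cr t(1,3)] t by blast
qed

lemma cent_abelian: assumes cr: "cyc_reduced c" and s1: "s1 \<in> cent c" and s2: "s2 \<in> cent c"
  shows "s1 \<otimes> s2 = s2 \<otimes> s1"
proof -
  have cc: "c \<in> carrier P" using cr cyc_reduced_carrier by simp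
  have sc: "s1 \<in> carrier P" "s2 \<in> carrier P" using s1 s2 cent_carrier by auto
  have m: "s1 \<otimes> s2 \<in> cent c" "s2 \<otimes> s1 \<in> cent c" using cent_mult s1 s2 cc by auto
  have "tlen c ((s1 \<otimes> s2) \<otimes> inv (s2 \<otimes> s1)) = 0"
    using tlen_mult[OF cr m(1) cent_inv[OF m(2) cc]] tlen_inv[OF cr m(2)]
      tlen_mult[OF cr s1 s2] tlen_mult[OF cr s2 s1] by simp
  then have "(s1 \<otimes> s2) \<otimes> inv (s2 \<otimes> s1) = \<one>"
    using tlen_eq_zero[OF cr cent_mult[OF m(1) cent_inv[OF m(2) cc] cc]] by simp
  then show ?thesis using sc mult_inv_eq_one_iff[of "s1 \<otimes> s2" "s2 \<otimes> s1"] by simp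
qed

lemma tlen_inj:
  assumes cr: "cyc_reduced c" and s1: "s1 \<in> cent c" and s2: "s2 \<in> cent c"
    and e: "tlen c s1 = tlen c s2"
  shows "s1 = s2"
proof -
  have cc: "c \<in> carrier P" using cr cyc_reduced_carrier by simp
  have sc: "s1 \<in> carrier P" "s2 \<in> carrier P" using s1 s2 cent_carrier by auto
  have "tlen c (s1 \<otimes> inv s2) = 0"
    using tlen_mult[OF cr s1 cent_inv[OF s2 cc]] tlen_inv[OF cr s2] e by simp
  then have "s1 \<otimes> inv s2 = \<one>"
    using tlen_eq_zero[OF cr cent_mult[OF s1 cent_inv[OF s2 cc] cc]] by simp
  then show ?thesis using sc mult_inv_eq_one_iff by simp
qed

text \<open>A conjugation that maps \<open>cent c\<close> onto itself is an automorphism of an infinite cyclic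
  group, so it multiplies translation lengths by \<open>\<plusminus>1\<close>.\<close>

lemma tlen_conjugate_sign: assumes cr: "cyc_reduced c" and y: "y \<in> carrier P"
    and nz: "\<forall>s\<in>cent c. conjugate y s \<in> cent c \<and> conjugate (inv y) s \<in> cent c"
  shows "\<exists>e. (e = 1 \<or> e = -1) \<and> (\<forall>s\<in>cent c. tlen c (conjugate y s) = e * tlen c s)"
proof -
  obtain t where t: "t \<in> cent c" "tlen c t > 0"
      "\<forall>s\<in>cent c. \<exists>q. s = t [^] (q::int) \<and> tlen c s = q * tlen c t"
    using tlen_generator[OF cr] by blast
  have tc: "t \<in> carrier P" using t cent_carrier by simp
  obtain e :: int where e: "conjugate y t = t [^] e" "tlen c (conjugate y t) = e * tlen c t"
    using t(3) nz t(1) by blast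
  have "conjugate (inv y) t \<in> cent c" using nz t(1) by blast
  then obtain f :: int where f: "conjugate (inv y) t = t [^] f" using t(3) by blast
  have gt: "conjugate y t \<in> cent c" using nz t(1) by blast
  have "t = conjugate y (conjugate (inv y) t)" using y tc by simp
  also have "\<dots> = (conjugate y t) [^] f" using f conjugate_int_pow y tc by simp
  finally have "tlen c t = f * tlen c (conjugate y t)" using tlen_int_pow[OF cr gt] by metis
  then have "tlen c t = f * e * tlen c t" using e(2) by simp
  then have "1 * tlen c t = (f * e) * tlen c t" by simp
  then have fe: "f * e = 1" using t(2) by (metis mult_cancel_right less_irrefl)
  then have e1: "e = 1 \<or> e = -1" using zmult_eq_1_iff by (metis mult.commute)
  have "\<forall>s\<in>cent c. tlen c (conjugate y s) = e * tlen c s"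
  proof
    fix s assume s: "s \<in> cent c"
    obtain q where q: "s = t [^] q" "tlen c s = q * tlen c t" using t(3) s by blast
    have "conjugate y s = (conjugate y t) [^] q" using q(1) conjugate_int_pow y tc by simp
    then have "tlen c (conjugate y s) = q * tlen c (conjugate y t)"
      using tlen_int_pow[OF cr gt] by simp
    then show "tlen c (conjugate y s) = e * tlen c s" using e(2) q(2) by simp
  qed
  then show ?thesis using e1 by blast
qed

text \<open>If \<open>y c y\<inverse>\<close> commutes with \<open>c\<close>, conjugation by \<open>y\<close> maps \<open>cent c\<close> onto itself: both
  \<open>cent c\<close> and \<open>cent (y c y\<inverse>)\<close> are abelian and contain \<open>c\<close> and \<open>y c y\<inverse>\<close>.\<close>

lemma conjugate_preserves_cent:
  assumes cr: "cyc_reduced c" and y: "y \<in> carrier P" and d: "conjugate y c \<in> cent c"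
  shows "\<forall>s\<in>cent c. conjugate y s \<in> cent c \<and> conjugate (inv y) s \<in> cent c"
proof
  fix s assume s: "s \<in> cent c"
  have cc: "c \<in> carrier P" using cr cyc_reduced_carrier by simp
  have sc: "s \<in> carrier P" using s cent_carrier by simp
  have iy: "inv y \<in> carrier P" using y by simp
  have dc: "conjugate y c \<in> carrier P" using y cc by simp
  have s0: "conjugate (inv y) c \<in> cent c"
  proof -
    have "c \<otimes> conjugate y c = conjugate y c \<otimes> c" using d unfolding cent_eq by auto
    then have "conjugate (inv y) c \<otimes> c = c \<otimes> conjugate (inv y) c"
      using conjugate_commute_iff[OF iy cc dc] y cc by simp
    then show ?thesis using y cc unfolding cent_eq by simp
  qed
  have "conjugate y s \<otimes> c = c \<otimes> conjugate y s"
    using conjugate_commute_iff[OF y sc conjugate_closed[OF iy cc]] cent_abelian[OF cr s s0] y cc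
    by simp
  moreover have "conjugate (inv y) s \<otimes> c = c \<otimes> conjugate (inv y) s"
    using conjugate_commute_iff[OF iy sc dc] cent_abelian[OF cr s d] y cc by simp
  ultimately show "conjugate y s \<in> cent c \<and> conjugate (inv y) s \<in> cent c"
    using y iy sc unfolding cent_eq by auto
qed

text \<open>Hence \<open>y\<close> fixes or inverts \<open>c\<close>; and if it inverts \<open>c\<close>, it inverts the whole
  centralizer and is an involution (\<open>y\<^sup>2\<close> is fixed by \<open>y\<close>, hence equal to its own inverse).\<close>

lemma cyc_reduced_commuting_conjugate:
  assumes cr: "cyc_reduced c" and y: "y \<in> carrier P" and d: "conjugate y c \<in> cent c"
  shows "conjugate y c = c \<or> conjugate y c = inv c"
proof -
  have cc: "c \<in> carrier P" using cr cyc_reduced_carrier by simp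
  obtain e where e: "e = 1 \<or> e = -1" "\<forall>s\<in>cent c. tlen c (conjugate y s) = e * tlen c s"
    using tlen_conjugate_sign[OF cr y conjugate_preserves_cent[OF cr y d]] by blast
  have tcy: "tlen c (conjugate y c) = e * tlen c c" using e(2) self_cent[OF cc] by blast
  show ?thesis
  proof (cases "e = 1")
    case True
    then show ?thesis using tlen_inj[OF cr d self_cent[OF cc]] tcy by simp
  next
    case False
    then have "e = -1" using e by simp
    then show ?thesis
      using tlen_inj[OF cr d cent_inv[OF self_cent[OF cc] cc]] tcy tlen_inv[OF cr self_cent[OF cc]]
      by simp
  qed
qed

lemma cyc_reduced_inverting_conjugate:
  assumes cr: "cyc_reduced c" and y: "y \<in> carrier P" and d: "conjugate y c = inv c"
  shows "y \<otimes> y = \<one> \<and> (\<forall>s\<in>cent c. conjugate y s = inv s)"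
proof -
  have cc: "c \<in> carrier P" using cr cyc_reduced_carrier by simp
  have d': "conjugate y c \<in> cent c" using d cent_inv[OF self_cent[OF cc] cc] by simp
  obtain e where e: "e = 1 \<or> e = -1" "\<forall>s\<in>cent c. tlen c (conjugate y s) = e * tlen c s"
    using tlen_conjugate_sign[OF cr y conjugate_preserves_cent[OF cr y d']] by blast
  have tcpos: "tlen c c > 0" using tlen_self[OF cr] cyc_reduced_nf[OF cr] by simp
  have "tlen c (inv c) = e * tlen c c" using e(2) self_cent[OF cc] d by metis
  then have "- tlen c c = e * tlen c c" using tlen_inv[OF cr self_cent[OF cc]] by simp
  then have em: "e = -1" using e(1) tcpos by auto
  have inv_all: "\<forall>s\<in>cent c. conjugate y s = inv s"
  proof
    fix s assume s: "s \<in> cent c"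
    have "conjugate y s \<in> cent c" using conjugate_preserves_cent[OF cr y d'] s by blast
    moreover have "tlen c (conjugate y s) = tlen c (inv s)"
      using e(2) s em tlen_inv[OF cr s] by simp
    ultimately show "conjugate y s = inv s" using tlen_inj[OF cr _ cent_inv[OF s cc]] by blast
  qed
  have yy: "y \<otimes> y \<in> cent c"
  proof -
    have "conjugate (y \<otimes> y) c = conjugate y (conjugate y c)"
      using y cc by (simp add: conjugate_conjugate)
    also have "\<dots> = c" using d y cc conjugate_inv by simp
    finally have "conjugate (y \<otimes> y) c = c" .
    then have "(y \<otimes> y) \<otimes> c = c \<otimes> (y \<otimes> y)" using conjugate_fixed_iff[of "y \<otimes> y" c] y cc by simp
    then show ?thesis using y unfolding cent_eq by simp
  qed
  have "conjugate y (y \<otimes> y) = y \<otimes> y" using y by (simp add: conjugate_def m_assoc)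
  then have "y \<otimes> y = inv (y \<otimes> y)" using inv_all yy by metis
  then have "tlen c (y \<otimes> y) = - tlen c (y \<otimes> y)" using tlen_inv[OF cr yy] by metis
  then have "tlen c (y \<otimes> y) = 0" by simp
  then have "y \<otimes> y = \<one>" using tlen_eq_zero[OF cr yy] by simp
  then show ?thesis using inv_all by simp
qed

text \<open>The definition is symmetric in the two factors, and a
  non-elliptic element is conjugate to a cyclically reduced one; this transports the
  results above to arbitrary non-elliptic elements.\<close>

lemma free_product_swap: "is_free_product P B A"
proof -
  have "reduced_word P B A xs = reduced_word P A B xs" for xs
    unfolding reduced_word_def by blast
  moreover have "B \<union> A = A \<union> B" by blast
  ultimately show ?thesis using is_fp unfolding is_free_product_def by simp
qed

lemma elliptic_iff: "elliptic P A B x \<longleftrightarrow> (\<exists>p\<in>carrier P. \<exists>a\<in>A \<union> B. x = conjugate p a)"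
  unfolding elliptic_def conjugate_def by simp

lemma nonelliptic_conj_cyc_reduced: assumes "x \<in> carrier P" "\<not> elliptic P A B x"
  shows "\<exists>w\<in>carrier P. \<exists>c. cyc_reduced c \<and> x = conjugate w c"
proof -
  obtain w c where w: "w \<in> carrier P" "x = w \<otimes> c \<otimes> inv w" "c \<in> A \<union> B \<or> cyc_reduced c"
    using conjugate_letter_or_cyc_reduced[OF assms(1)] by blast
  show ?thesis
  proof (cases "c \<in> A \<union> B")
    case True then have "elliptic P A B x" unfolding elliptic_def using w by blast
    then show ?thesis using assms by simp
  next
    case False then show ?thesis using w unfolding conjugate_def by blast
  qed
qed

lemma one_elliptic: "elliptic P A B \<one>"
  unfolding elliptic_iff using subgroup.one_closed[OF subgroup_A] by (intro bexI[of _ \<one>]) auto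

text \<open>A non-elliptic element is not
  an involution, since the normal form of its cyclically reduced conjugate \<open>c\<close> makes
  \<open>c\<^sup>2 \<noteq> 1\<close>.\<close>

lemma nonelliptic_square_ne_one: assumes "x \<in> carrier P" "\<not> elliptic P A B x" shows "x \<otimes> x \<noteq> \<one>"
proof -
  obtain w c where w: "w \<in> carrier P" "cyc_reduced c" "x = conjugate w c"
    using nonelliptic_conj_cyc_reduced[OF assms] by blast
  have cc: "c \<in> carrier P" using w cyc_reduced_carrier by simp
  have "nf (c [^] (2::nat)) \<noteq> []"
    using nf_pow_cyc_reduced[OF w(2), of 2] cyc_reduced_nf[OF w(2)] by (simp add: word_pow_def)
  then have "c [^] (2::nat) \<noteq> \<one>" by auto
  then have "c \<otimes> c \<noteq> \<one>" using cc by (simp add: numeral_2_eq_2)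
  then show ?thesis using w cc conjugate_mult[symmetric] conjugate_eq_one_iff by simp
qed

text \<open>An element commuting with a nontrivial elliptic element is elliptic: after
  conjugation the latter lies in a factor, whose nontrivial elements have their
  centralizer inside that factor.\<close>

lemma commutes_with_elliptic:
  assumes x: "x \<in> carrier P" "x \<noteq> \<one>" "elliptic P A B x" and y: "y \<in> carrier P"
    and c: "x \<otimes> y = y \<otimes> x"
  shows "elliptic P A B y"
proof -
  interpret BA: free_product P B A by unfold_locales (rule free_product_swap)
  obtain p a where pa: "p \<in> carrier P" "a \<in> A \<union> B" "x = conjugate p a"
    using x(3) unfolding elliptic_iff by blast
  have ac: "a \<in> carrier P" using pa A_carrier B_carrier by blast
  have ip: "inv p \<in> carrier P" using pa by simp
  have a1: "a \<noteq> \<one>"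
  proof
    assume "a = \<one>" then show False using x pa by simp
  qed
  define y' where "y' = conjugate (inv p) y"
  have y'c: "y' \<in> carrier P" unfolding y'_def using y ip by simp
  have "conjugate (inv p) x \<otimes> conjugate (inv p) y = conjugate (inv p) y \<otimes> conjugate (inv p) x"
    using conjugate_commute_iff[OF ip x(1) y] c by simp
  then have com: "y' \<otimes> a = a \<otimes> y'" unfolding y'_def using pa ac by simp
  have "y' \<in> A \<union> B"
  proof (cases "a \<in> A")
    case True then show ?thesis using centralizer_in_A[OF True a1 y'c com] by simp
  next
    case False then have "a \<in> B" using pa by simp
    then show ?thesis using BA.centralizer_in_A[OF _ a1 y'c com] by simp
  qed
  moreover have "y = conjugate p y'" unfolding y'_def using pa y by simp
  ultimately show ?thesis unfolding elliptic_iff using pa by blast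
qed

lemma nonelliptic_centralizer_commutative:
  assumes x: "x \<in> carrier P" "\<not> elliptic P A B x" and yz: "y \<in> carrier P" "z \<in> carrier P"
    and c1: "y \<otimes> x = x \<otimes> y" and c2: "z \<otimes> x = x \<otimes> z"
  shows "y \<otimes> z = z \<otimes> y"
proof -
  obtain w c where w: "w \<in> carrier P" "cyc_reduced c" "x = conjugate w c"
    using nonelliptic_conj_cyc_reduced[OF x] by blast
  have cc: "c \<in> carrier P" using w cyc_reduced_carrier by simp
  have iw: "inv w \<in> carrier P" using w by simp
  have "conjugate (inv w) y \<in> cent c"
    using conjugate_commute_iff[OF iw yz(1) x(1)] c1 w cc yz iw unfolding cent_eq by simp
  moreover have "conjugate (inv w) z \<in> cent c"
    using conjugate_commute_iff[OF iw yz(2) x(1)] c2 w cc yz iw unfolding cent_eq by simp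
  ultimately show ?thesis using cent_abelian[OF w(2)] conjugate_commute_iff[OF iw yz] by metis
qed

lemma nonelliptic_commuting_conjugate:
  assumes x: "x \<in> carrier P" "\<not> elliptic P A B x" and y: "y \<in> carrier P"
    and c1: "conjugate y x \<otimes> x = x \<otimes> conjugate y x"
  shows "conjugate y x = x \<or> conjugate y x = inv x"
proof -
  obtain w c where w: "w \<in> carrier P" "cyc_reduced c" "x = conjugate w c"
    using nonelliptic_conj_cyc_reduced[OF x] by blast
  have cc: "c \<in> carrier P" using w cyc_reduced_carrier by simp
  have iw: "inv w \<in> carrier P" using w by simp
  define y' where "y' = conjugate (inv w) y"
  have y'c: "y' \<in> carrier P" unfolding y'_def using iw y by simp
  have e: "conjugate y' c = conjugate (inv w) (conjugate y x)" unfolding y'_def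
    using conjugate_shift[OF w(1) y cc] w by simp
  have "conjugate (inv w) (conjugate y x) \<otimes> conjugate (inv w) x = conjugate (inv w) x \<otimes> conjugate (inv w) (conjugate y x)"
    using conjugate_commute_iff[OF iw _ x(1), of "conjugate y x"] c1 y x by simp
  then have "conjugate y' c \<in> cent c" using e w cc y'c y iw x(1) unfolding cent_eq by simp
  then have "conjugate y' c = c \<or> conjugate y' c = inv c"
    using cyc_reduced_commuting_conjugate[OF w(2) y'c] by blast
  then have "conjugate w (conjugate y' c) = x \<or> conjugate w (conjugate y' c) = inv x"
    using w cc conjugate_inv by auto
  moreover have "conjugate w (conjugate y' c) = conjugate y x" using e w y x by simp
  ultimately show ?thesis by simp
qed

lemma nonelliptic_inverting_conjugate:
  assumes x: "x \<in> carrier P" "\<not> elliptic P A B x" and y: "y \<in> carrier P"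
    and c1: "conjugate y x = inv x"
  shows "elliptic P A B y \<and> y \<otimes> y = \<one> \<and> (\<forall>z\<in>carrier P. z \<otimes> x = x \<otimes> z \<longrightarrow> conjugate y z = inv z)"
proof -
  obtain w c where w: "w \<in> carrier P" "cyc_reduced c" "x = conjugate w c"
    using nonelliptic_conj_cyc_reduced[OF x] by blast
  have cc: "c \<in> carrier P" using w cyc_reduced_carrier by simp
  have iw: "inv w \<in> carrier P" using w by simp
  define y' where "y' = conjugate (inv w) y"
  have y'c: "y' \<in> carrier P" unfolding y'_def using iw y by simp
  have yy': "y = conjugate w y'" unfolding y'_def using w y by simp
  have e: "conjugate y' c = conjugate (inv w) (conjugate y x)" unfolding y'_def
    using conjugate_shift[OF w(1) y cc] w by simp
  also have "\<dots> = inv c" using c1 w cc conjugate_inv[OF iw] by simp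
  finally have "conjugate y' c = inv c" .
  then have p4: "y' \<otimes> y' = \<one> \<and> (\<forall>s\<in>cent c. conjugate y' s = inv s)"
    using cyc_reduced_inverting_conjugate[OF w(2) y'c] by blast
  have yy: "y \<otimes> y = \<one>" using p4 yy' w y'c conjugate_mult[symmetric] by simp
  have zz: "\<forall>z\<in>carrier P. z \<otimes> x = x \<otimes> z \<longrightarrow> conjugate y z = inv z"
  proof (intro ballI impI)
    fix z assume z: "z \<in> carrier P" and zc: "z \<otimes> x = x \<otimes> z"
    have "conjugate (inv w) z \<otimes> conjugate (inv w) x = conjugate (inv w) x \<otimes> conjugate (inv w) z"
      using conjugate_commute_iff[OF iw z x(1)] zc by simp
    then have "conjugate (inv w) z \<in> cent c" using w cc z unfolding cent_eq by simp
    then have "conjugate y' (conjugate (inv w) z) = inv (conjugate (inv w) z)" using p4 by blast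
    then have "conjugate w (conjugate y' (conjugate (inv w) z)) = conjugate w (inv (conjugate (inv w) z))"
      by simp
    moreover have "conjugate w (conjugate y' (conjugate (inv w) z)) = conjugate y z"
      using yy' conjugate_by_conjugate[OF w(1) y'c, of "conjugate (inv w) z"] w z y'c by simp
    moreover have "conjugate w (inv (conjugate (inv w) z)) = inv z"
      using conjugate_inv[OF w(1), of "conjugate (inv w) z"] w z by simp
    ultimately show "conjugate y z = inv z" by simp
  qed
  have "elliptic P A B y"
  proof (rule ccontr)
    assume "\<not> elliptic P A B y"
    then show False using nonelliptic_square_ne_one[OF y] yy by simp
  qed
  then show ?thesis using yy zz by blast
qed

end

text \<open>A group together with a distinguished set
  \<open>E\<close> of ``elliptic'' elements is an \<^emph>\<open>elliptic structure\<close> if the four properties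
  below hold; they are exactly what the free products \<open>A * B\<close> satisfy for their
  elliptic elements (see the lemmas of locale \<open>free_product\<close>) and what survives the
  passage to a limit group.\<close>

locale elliptic_structure = group +
  fixes E :: "'a set"
  assumes one_in_E: "\<one> \<in> E"
    and commute_nonelliptic: "\<And>u v. \<lbrakk>u \<in> carrier G; v \<in> carrier G; v \<noteq> \<one>;
          u \<otimes> v = v \<otimes> u; u \<notin> E\<rbrakk> \<Longrightarrow> v \<notin> E"
    and centralizer_commutative: "\<And>u v w. \<lbrakk>u \<in> carrier G; v \<in> carrier G; w \<in> carrier G; u \<notin> E;
          v \<otimes> u = u \<otimes> v; w \<otimes> u = u \<otimes> w\<rbrakk> \<Longrightarrow> v \<otimes> w = w \<otimes> v"
    and commuting_conjugate: "\<And>u l. \<lbrakk>u \<in> carrier G; l \<in> carrier G; u \<notin> E;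
          conjugate l u \<otimes> u = u \<otimes> conjugate l u\<rbrakk> \<Longrightarrow> conjugate l u = u \<or> conjugate l u = inv u"
    and inverting_conjugate: "\<And>u l. \<lbrakk>u \<in> carrier G; l \<in> carrier G; u \<notin> E; conjugate l u = inv u\<rbrakk>
          \<Longrightarrow> l \<in> E \<and> l \<otimes> l = \<one> \<and> (\<forall>z\<in>carrier G. z \<otimes> u = u \<otimes> z \<longrightarrow> conjugate l z = inv z)"
begin

lemma commuting_triple:
  assumes u: "u1 \<in> carrier G" "u2 \<in> carrier G" "u3 \<in> carrier G"
    and nontrivial: "u1 \<noteq> \<one>" "u2 \<noteq> \<one>" "u3 \<noteq> \<one>"
    and some_nonelliptic: "u1 \<notin> E \<or> u2 \<notin> E \<or> u3 \<notin> E"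
    and c12: "commutator G u1 u2 = \<one>" and c13: "commutator G u1 u3 = \<one>"
  shows "u1 \<notin> E \<and> u2 \<notin> E \<and> u3 \<notin> E \<and> commutator G u2 u3 = \<one>"
proof -
  have c12': "u1 \<otimes> u2 = u2 \<otimes> u1" and c13': "u1 \<otimes> u3 = u3 \<otimes> u1"
    using c12 c13 commutator_eq_one_iff u by auto
  have n1: "u1 \<notin> E"
    using some_nonelliptic commute_nonelliptic[OF u(2) u(1)] commute_nonelliptic[OF u(3) u(1)]
      nontrivial c12' c13' by auto
  have "u2 \<notin> E" "u3 \<notin> E"
    using commute_nonelliptic[OF u(1) u(2)] commute_nonelliptic[OF u(1) u(3)]
      nontrivial c12' c13' n1 by auto
  moreover have "u2 \<otimes> u3 = u3 \<otimes> u2" using centralizer_commutative[OF u n1] c12' c13' by simp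
  ultimately show ?thesis using n1 commutator_eq_one_iff u by simp
qed

end

text \<open>Everything is controlled by \<open>a\<close>: the centralizer of \<open>Ab\<close> is the
  centralizer of \<open>a\<close>, and an element normalizing \<open>Ab\<close> either fixes or inverts \<open>a\<close>.\<close>

locale nonelliptic_abelian_subgroup = elliptic_structure +
  fixes Ab and a
  assumes subgroup_Ab: "subgroup Ab G" and abelian_Ab: "abelian_set G Ab"
    and a_Ab: "a \<in> Ab" and a_nonelliptic: "a \<notin> E"
begin

abbreviation C where "C \<equiv> centralizer G Ab"
abbreviation N where "N \<equiv> normalizer G Ab"

lemma Ab_carrier: "Ab \<subseteq> carrier G" using subgroup.subset[OF subgroup_Ab] .

lemma a_carrier: "a \<in> carrier G" using a_Ab Ab_carrier by blast

lemma commute_a: "b \<in> Ab \<Longrightarrow> b \<otimes> a = a \<otimes> b"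
  using abelian_Ab a_Ab unfolding abelian_set_def by blast

lemma C_iff: "x \<in> C \<longleftrightarrow> x \<in> carrier G \<and> x \<otimes> a = a \<otimes> x"
proof
  assume "x \<in> C" then show "x \<in> carrier G \<and> x \<otimes> a = a \<otimes> x"
    using a_Ab unfolding centralizer_def by auto
next
  assume x: "x \<in> carrier G \<and> x \<otimes> a = a \<otimes> x"
  have "x \<otimes> b = b \<otimes> x" if b: "b \<in> Ab" for b
    using centralizer_commutative[OF a_carrier _ _ a_nonelliptic, of x b] x commute_a[OF b]
      b Ab_carrier by auto
  then show "x \<in> C" using x unfolding centralizer_def by auto
qed

lemma C_carrier: "x \<in> C \<Longrightarrow> x \<in> carrier G" using C_iff by blast

lemma C_abelian: "abelian_set G C"
  unfolding abelian_set_def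
  using centralizer_commutative[OF a_carrier _ _ a_nonelliptic] C_iff by auto

lemma Ab_subset_C: "Ab \<subseteq> C"
  using abelian_Ab Ab_carrier unfolding abelian_set_def centralizer_def by auto

lemma C_subgroup: "subgroup C G"
proof (rule subgroupI)
  show "C \<subseteq> carrier G" using C_carrier by blast
  show "C \<noteq> {}" using Ab_subset_C a_Ab by blast
next
  fix x assume "x \<in> C"
  then have x: "x \<in> carrier G" "conjugate x a = a" using C_iff conjugate_fixed_iff a_carrier by auto
  have "conjugate (inv x) a = a" using x a_carrier by (metis conjugate_cancel)
  then show "inv x \<in> C" using x C_iff conjugate_fixed_iff a_carrier by simp
next
  fix x y assume "x \<in> C" "y \<in> C"
  then have xy: "x \<in> carrier G" "y \<in> carrier G" "conjugate x a = a" "conjugate y a = a"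
    using C_iff conjugate_fixed_iff a_carrier by auto
  then have "conjugate (x \<otimes> y) a = a" using conjugate_conjugate[of x y a] a_carrier by simp
  then show "x \<otimes> y \<in> C" using C_iff conjugate_fixed_iff a_carrier xy by simp
qed

lemma abelian_containing_Ab_subset_C:
  assumes "subgroup M G" "abelian_set G M" "Ab \<subseteq> M" shows "M \<subseteq> C"
  using assms a_Ab subgroup.subset C_iff unfolding abelian_set_def by blast

lemma C_max: "max_abelian_subgroup G C"
  unfolding max_abelian_subgroup_def
  using C_subgroup C_abelian abelian_containing_Ab_subset_C Ab_subset_C by blast

lemma C_unique: assumes "max_abelian_subgroup G M" "Ab \<subseteq> M" shows "M = C"
  using assms abelian_containing_Ab_subset_C[of M] C_subgroup C_abelian
  unfolding max_abelian_subgroup_def by blast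

lemma C_inter_E: "C \<inter> E = {\<one>}"
proof -
  have "x \<notin> E" if "x \<in> C" "x \<noteq> \<one>" for x
    using that C_iff commute_nonelliptic[OF a_carrier, of x] a_nonelliptic by auto
  then show ?thesis using one_in_E subgroup.one_closed[OF C_subgroup] by blast
qed

lemma N_iff: "l \<in> N \<longleftrightarrow> l \<in> carrier G \<and> conjugate l ` Ab = Ab"
  using normalizer_iff[OF Ab_carrier] conjugate_set_image[OF Ab_carrier] by auto

lemma fixing_a_in_C: "l \<in> carrier G \<Longrightarrow> conjugate l a = a \<Longrightarrow> l \<in> C"
  using conjugate_fixed_iff[OF _ a_carrier] C_iff by simp

lemma inverting_a: assumes "l \<in> carrier G" "conjugate l a = inv a"
  shows "l \<in> E \<and> l \<otimes> l = \<one> \<and> (\<forall>z\<in>C. conjugate l z = inv z)"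
  using inverting_conjugate[OF a_carrier assms(1) a_nonelliptic assms(2)] C_iff by auto

lemma C_subset_N: "C \<subseteq> N"
proof
  fix l assume l: "l \<in> C"
  have "l \<otimes> b = b \<otimes> l" if "b \<in> Ab" for b using l that unfolding centralizer_def by blast
  then have fixes_Ab: "conjugate l b = b" if "b \<in> Ab" for b
    using that conjugate_fixed_iff[OF C_carrier[OF l]] Ab_carrier by blast
  have "conjugate l ` Ab = (\<lambda>b. b) ` Ab" by (rule image_cong) (simp_all add: fixes_Ab)
  then show "l \<in> N" using N_iff C_carrier[OF l] by simp
qed

lemma inverting_in_N: assumes l: "l \<in> carrier G" and inverts: "\<forall>z\<in>C. conjugate l z = inv z"
  shows "l \<in> N"
proof -
  have inv_b: "conjugate l b = inv b" if "b \<in> Ab" for b using inverts Ab_subset_C that by blast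
  have "conjugate l ` Ab = (\<lambda>b. inv b) ` Ab" by (rule image_cong) (simp_all add: inv_b)
  also have "\<dots> = Ab" using subgroup.m_inv_closed[OF subgroup_Ab] Ab_carrier
    by (auto intro!: image_eqI[where x = "inv b" for b])
  finally show ?thesis using N_iff l by simp
qed

lemma N_fixes_or_inverts_a: assumes "l \<in> N" shows "conjugate l a = a \<or> conjugate l a = inv a"
proof -
  have "l \<in> carrier G" "conjugate l a \<in> Ab" using assms N_iff a_Ab by auto
  then show ?thesis using commuting_conjugate[OF a_carrier _ a_nonelliptic] commute_a by simp
qed

lemma N_subgroup: "subgroup N G" using normalizer_imp_subgroup[OF Ab_carrier] .

lemma N_carrier: "l \<in> N \<Longrightarrow> l \<in> carrier G" using N_subgroup subgroup.subset by blast

lemma N_cases: "l \<in> N \<Longrightarrow> l \<in> C \<or> (l \<notin> C \<and> conjugate l a = inv a)"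
  using N_fixes_or_inverts_a fixing_a_in_C N_carrier by blast

lemma inverting_pair: assumes l: "l \<in> carrier G" "conjugate l a = inv a"
    and e: "e \<in> carrier G" "conjugate e a = inv a"
  shows "l \<otimes> inv e \<in> C"
proof -
  have "conjugate (inv e) a = inv a"
    using e a_carrier conjugate_inv by (metis conjugate_cancel inv_closed inv_inv)
  then have "conjugate (l \<otimes> inv e) a = conjugate l (inv a)"
    using conjugate_conjugate[OF l(1) inv_closed[OF e(1)] a_carrier] by simp
  also have "\<dots> = a" using conjugate_inv[OF l(1) a_carrier] l a_carrier by simp
  finally show ?thesis using fixing_a_in_C l(1) e(1) by simp
qed

abbreviation I where "I \<equiv> {C #> g | g. g \<in> N}"

lemma coset_C: "g \<in> C \<Longrightarrow> C #> g = C"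
  using subgroup.rcos_const[OF C_subgroup is_group] by simp

lemma same_coset_outside_C: assumes g: "g \<in> N" "g \<notin> C" and e: "e \<in> N" "e \<notin> C"
  shows "C #> g = C #> e"
proof -
  have gc: "g \<in> carrier G" and ec: "e \<in> carrier G" using g e N_carrier by auto
  have "g \<otimes> inv e \<in> C" using inverting_pair[OF gc _ ec] N_cases g e by auto
  then have "C #> (g \<otimes> inv e) #> e = C #> e" using coset_C by simp
  then show ?thesis using coset_mult_assoc[of C "g \<otimes> inv e" e] C_carrier gc ec
    by (auto simp: m_assoc)
qed

lemma cosets_subset: "\<exists>e. I \<subseteq> {C, C #> e}"
proof (cases "N \<subseteq> C")
  case True
  then have "I \<subseteq> {C}" using coset_C by blast
  then show ?thesis by blast
next
  case False
  then obtain e where e: "e \<in> N" "e \<notin> C" by blast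
  then have "I \<subseteq> {C, C #> e}" using coset_C same_coset_outside_C by blast
  then show ?thesis by blast
qed

lemma cosets_finite_le_2: "finite I \<and> card I \<le> 2"
proof -
  obtain e where e: "I \<subseteq> {C, C #> e}" using cosets_subset by blast
  have "card I \<le> card {C, C #> e}" using e by (intro card_mono) auto
  also have "\<dots> \<le> 2" by (cases "C = C #> e") auto
  finally show ?thesis using e finite_subset by auto
qed

lemma involution_order_2: assumes "e \<in> carrier G" "e \<otimes> e = \<one>" "e \<noteq> \<one>" shows "ord e = 2"
proof -
  have "e [^] (2::nat) = \<one>" using assms by (simp add: numeral_2_eq_2)
  then have "ord e dvd 2" using pow_eq_id[OF assms(1)] by simp
  then have "ord e \<le> 2" and "ord e \<noteq> 0"
    using dvd_imp_le[of "ord e" 2] by (simp, metis dvd_0_left_iff zero_neq_numeral)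
  moreover have "ord e \<noteq> 1" using ord_eq_1[OF assms(1)] assms(3) by simp
  ultimately show ?thesis by linarith
qed

lemma N_generated: assumes e: "e \<in> N" "e \<notin> C" shows "generate G (C \<union> {e}) = N"
proof
  show "generate G (C \<union> {e}) \<subseteq> N"
    using generate_subgroup_incl[OF _ N_subgroup] C_subset_N e(1) by simp
  have ec: "e \<in> carrier G" and ea: "conjugate e a = inv a" using e N_carrier N_cases by auto
  show "N \<subseteq> generate G (C \<union> {e})"
  proof
    fix l assume l: "l \<in> N"
    show "l \<in> generate G (C \<union> {e})"
    proof (cases "l \<in> C")
      case True then show ?thesis by (intro generate.incl) simp
    next
      case False
      have lc: "l \<in> carrier G" using l N_carrier by simp
      have "l \<otimes> inv e \<in> C" using inverting_pair[OF lc _ ec ea] N_cases l False by auto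
      then have "(l \<otimes> inv e) \<otimes> e \<in> generate G (C \<union> {e})"
        by (intro generate.eng generate.incl) auto
      then show ?thesis using lc ec by (simp add: m_assoc)
    qed
  qed
qed

lemma index_two: assumes "card I = 2"
  shows "\<exists>e\<in>N. e \<in> E \<and> group.ord G e = 2 \<and> generate G (C \<union> {e}) = N \<and>
           (\<forall>c\<in>C. e \<otimes> c \<otimes> inv e = inv c)"
proof -
  have "\<not> N \<subseteq> C"
  proof
    assume "N \<subseteq> C"
    then have "I \<subseteq> {C}" using coset_C by blast
    then have "card I \<le> 1" using card_mono[of "{C}" I] by simp
    then show False using assms by simp
  qed
  then obtain e where e: "e \<in> N" "e \<notin> C" by blast
  have ec: "e \<in> carrier G" using e N_carrier by simp
  have inv: "e \<in> E" "e \<otimes> e = \<one>" "\<forall>z\<in>C. conjugate e z = inv z"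
    using inverting_a[OF ec] N_cases e by auto
  have "e \<noteq> \<one>" using e(2) subgroup.one_closed[OF C_subgroup] by blast
  then show ?thesis using e inv involution_order_2[OF ec inv(2)] N_generated[OF e]
    unfolding conjugate_def by blast
qed

text \<open>Part (iii), almost malnormality: if a conjugate \<open>l c l\<inverse>\<close> of a nontrivial
  \<open>c \<in> C\<close> lies in \<open>Ab\<close>, then \<open>l\<inverse> a l\<close> commutes with \<open>c\<close>, hence with \<open>a\<close>, so \<open>l\<inverse>\<close>
  fixes or inverts \<open>a\<close> and therefore normalizes \<open>Ab\<close>.\<close>

lemma conjugate_back_in_N:
  assumes l: "l \<in> carrier G" and c: "c \<in> C" "c \<noteq> \<one>" and lc: "conjugate l c \<in> Ab"
  shows "inv l \<in> N"
proof -
  have il: "inv l \<in> carrier G" and cc: "c \<in> carrier G" using l c C_carrier by auto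
  have cE: "c \<notin> E" using C_inter_E c by blast
  define a' where "a' = conjugate (inv l) a"
  have a'c: "a' \<in> carrier G" unfolding a'_def using il a_carrier by simp
  have "conjugate (inv l) (conjugate l c) \<otimes> a' = a' \<otimes> conjugate (inv l) (conjugate l c)"
    unfolding a'_def using conjugate_commute_iff[OF il conjugate_closed[OF l cc] a_carrier]
      commute_a[OF lc] by simp
  then have "c \<otimes> a' = a' \<otimes> c" using l cc by simp
  moreover have "a \<otimes> c = c \<otimes> a" using c(1) C_iff by simp
  ultimately have "a' \<otimes> a = a \<otimes> a'"
    using centralizer_commutative[OF cc a'c a_carrier cE] by simp
  then have "conjugate (inv l) a = a \<or> conjugate (inv l) a = inv a"
    using commuting_conjugate[OF a_carrier il a_nonelliptic] unfolding a'_def by simp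
  then show ?thesis
    using fixing_a_in_C[OF il] C_subset_N inverting_a[OF il] inverting_in_N[OF il] by blast
qed

lemma almost_malnormal: assumes l: "l \<in> carrier G - N" shows "(l <# C #> inv l) \<inter> Ab = {\<one>}"
proof -
  have lc: "l \<in> carrier G" using l by simp
  have cosets: "l <# C #> inv l = conjugate l ` C"
    using conjugate_set_image[OF _ lc] C_carrier by blast
  have "x = \<one>" if x: "x \<in> conjugate l ` C" "x \<in> Ab" for x
  proof (rule ccontr)
    assume "x \<noteq> \<one>"
    obtain c where c: "c \<in> C" "x = conjugate l c" using x by blast
    then have "c \<noteq> \<one>" using \<open>x \<noteq> \<one>\<close> lc by auto
    then have "inv (inv l) \<in> N"
      using conjugate_back_in_N[OF lc c(1)] c x subgroup.m_inv_closed[OF N_subgroup] by auto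
    then show False using l by simp
  qed
  moreover have "\<one> = conjugate l \<one>" using lc by simp
  then have "\<one> \<in> conjugate l ` C" using subgroup.one_closed[OF C_subgroup] by blast
  ultimately show ?thesis
    unfolding cosets using subgroup.one_closed[OF subgroup_Ab] by blast
qed

end

context elliptic_structure
begin

lemma abelian_subgroup_structure:
  assumes "subgroup Ab G" "abelian_set G Ab" "\<not> Ab \<subseteq> E"
  shows "(max_abelian_subgroup G (centralizer G Ab) \<and> Ab \<subseteq> centralizer G Ab \<and>
         (\<forall>M. max_abelian_subgroup G M \<and> Ab \<subseteq> M \<longrightarrow> M = centralizer G Ab) \<and>
         centralizer G Ab \<inter> E = {\<one>})
        \<and>
        (let C = centralizer G Ab; N = normalizer G Ab;
             I = {C #> g | g. g \<in> N} in
          finite I \<and> card I \<le> 2 \<and>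
          (\<forall>l \<in> carrier G - N. (l <# C #> inv l) \<inter> Ab = {\<one>}) \<and>
          (card I = 2 \<longrightarrow>
             (\<exists>e\<in>N. e \<in> E \<and> group.ord G e = 2 \<and>
                generate G (C \<union> {e}) = N \<and>
                (\<forall>c\<in>C. e \<otimes> c \<otimes> inv e = inv c))))"
proof -
  obtain a where "a \<in> Ab" "a \<notin> E" using assms(3) by blast
  then interpret nonelliptic_abelian_subgroup G E Ab a
    using assms elliptic_structure_axioms
    by (simp add: nonelliptic_abelian_subgroup_def nonelliptic_abelian_subgroup_axioms_def)
  show ?thesis unfolding Let_def
  proof (intro conjI allI impI ballI)
    show "max_abelian_subgroup G C" by (rule C_max)
    show "Ab \<subseteq> C" by (rule Ab_subset_C)
    show "M = C" if "max_abelian_subgroup G M \<and> Ab \<subseteq> M" for M using C_unique that by blast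
    show "C \<inter> E = {\<one>}" by (rule C_inter_E)
    show "finite I" "card I \<le> 2" using cosets_finite_le_2 by auto
    show "(l <# C #> inv l) \<inter> Ab = {\<one>}" if "l \<in> carrier G - N" for l
      using almost_malnormal that .
    show "\<exists>e\<in>N. e \<in> E \<and> group.ord G e = 2 \<and> generate G (C \<union> {e}) = N \<and>
        (\<forall>c\<in>C. e \<otimes> c \<otimes> inv e = inv c)" if "card I = 2" using index_two that .
  qed
qed

end
text \<open>Every
  element of \<open>L = G / K\<close> is \<open>\<eta> g = K #> g\<close>, and an equation between such elements holds in
  \<open>L\<close> iff it holds eventually along the sequence.  Convergence makes ``eventually
  nontrivial'' and ``eventually non-elliptic'' the negations of ``trivial in \<open>L\<close>'' and
  ``in \<open>E\<^sub>L\<close>''; this is what lets the free product facts pass to the limit.\<close>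

locale convergent_limit = group G for G (structure) +
  fixes P :: "nat \<Rightarrow> ('c, 'k) monoid_scheme" and A B :: "nat \<Rightarrow> 'c set"
    and h :: "nat \<Rightarrow> 'a \<Rightarrow> 'c"
  assumes convergent: "convergent_seq G P A B h"
begin

abbreviation K where "K \<equiv> stable_kernel G P h"
abbreviation L where "L \<equiv> limit_group G P h"
abbreviation EL where "EL \<equiv> limit_elliptics G P A B h"

lemma free_product_at: "free_product (P n) (A n) (B n)"
proof -
  have "is_free_product (P n) (A n) (B n)" using convergent unfolding convergent_seq_def by auto
  then show ?thesis unfolding free_product_def free_product_axioms_def is_free_product_def by auto
qed

lemma group_at: "group (P n)" using free_product_at free_product_def by blast

lemma hom_at: "group_hom G (P n) (h n)"
  using convergent group_at is_group unfolding convergent_seq_def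
  by (intro group_hom.intro group_hom_axioms.intro) auto

lemma h_mult: "x \<in> carrier G \<Longrightarrow> y \<in> carrier G \<Longrightarrow> h n (x \<otimes> y) = h n x \<otimes>\<^bsub>P n\<^esub> h n y"
  using group_hom.hom_mult[OF hom_at] by blast
lemma h_inv: "x \<in> carrier G \<Longrightarrow> h n (inv x) = inv\<^bsub>P n\<^esub> (h n x)"
  using group_hom.hom_inv[OF hom_at] by blast
lemma h_one: "h n \<one> = \<one>\<^bsub>P n\<^esub>"
  using group_hom.hom_one[OF hom_at] by blast
lemma h_carrier: "x \<in> carrier G \<Longrightarrow> h n x \<in> carrier (P n)"
  using group_hom.hom_closed[OF hom_at] by blast
lemma h_conjugate: "x \<in> carrier G \<Longrightarrow> y \<in> carrier G \<Longrightarrow>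
    h n (conjugate x y) = group.conjugate (P n) (h n x) (h n y)"
  unfolding conjugate_def group.conjugate_def[OF group_at] using h_mult h_inv by simp

lemma h_eq_iff: "x \<in> carrier G \<Longrightarrow> y \<in> carrier G \<Longrightarrow>
    h n (x \<otimes> inv y) = \<one>\<^bsub>P n\<^esub> \<longleftrightarrow> h n x = h n y"
  using group.mult_inv_eq_one_iff[OF group_at[of n], of "h n x" "h n y"] h_mult h_inv h_carrier
    by simp

text \<open>The two dichotomies of a convergent sequence; the first one applied to \<open>x y\<inverse>\<close>
  gives the dichotomy for equations.\<close>

lemma trivial_dichotomy: "g \<in> carrier G \<Longrightarrow>
    (\<forall>\<^sub>F n in sequentially. h n g = \<one>\<^bsub>P n\<^esub>) \<or> (\<forall>\<^sub>F n in sequentially. h n g \<noteq> \<one>\<^bsub>P n\<^esub>)"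
  using convergent unfolding convergent_seq_def by blast

lemma elliptic_dichotomy: "g \<in> carrier G \<Longrightarrow>
    (\<forall>\<^sub>F n in sequentially. elliptic (P n) (A n) (B n) (h n g)) \<or>
    (\<forall>\<^sub>F n in sequentially. \<not> elliptic (P n) (A n) (B n) (h n g))"
  using convergent unfolding convergent_seq_def by blast

lemma equation_dichotomy: assumes "x \<in> carrier G" "y \<in> carrier G"
  shows "(\<forall>\<^sub>F n in sequentially. h n x = h n y) \<or> (\<forall>\<^sub>F n in sequentially. h n x \<noteq> h n y)"
  using trivial_dichotomy[of "x \<otimes> inv y"] assms h_eq_iff by simp

lemma K_iff: "g \<in> K \<longleftrightarrow> g \<in> carrier G \<and> (\<forall>\<^sub>F n in sequentially. h n g = \<one>\<^bsub>P n\<^esub>)"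
  unfolding stable_kernel_def by simp

lemma K_subgroup: "subgroup K G"
proof (rule subgroupI)
  show "K \<subseteq> carrier G" using K_iff by blast
  show "K \<noteq> {}" using K_iff[of \<one>] h_one by auto
next
  fix x assume "x \<in> K"
  then show "inv x \<in> K"
    using K_iff h_inv group.inv_eq_1_iff[OF group_at] h_carrier by (auto elim: eventually_mono)
next
  fix x y assume "x \<in> K" "y \<in> K"
  then have "x \<in> carrier G" "y \<in> carrier G"
    "\<forall>\<^sub>F n in sequentially. h n x = \<one>\<^bsub>P n\<^esub> \<and> h n y = \<one>\<^bsub>P n\<^esub>"
    using K_iff eventually_conj by auto
  then show "x \<otimes> y \<in> K"
    using K_iff h_mult group_at by (auto elim: eventually_mono simp: group.is_monoid monoid.l_one)
qed

lemma K_normal: "K \<lhd> G"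
proof -
  have "x \<otimes> k \<otimes> inv x \<in> K" if x: "x \<in> carrier G" and k: "k \<in> K" for x k
  proof -
    have kc: "k \<in> carrier G" using k K_iff by blast
    have "h n (x \<otimes> k \<otimes> inv x) = \<one>\<^bsub>P n\<^esub>" if "h n k = \<one>\<^bsub>P n\<^esub>" for n
      using that h_mult h_inv x kc h_carrier group.r_inv[OF group_at]
      by (simp add: monoid.r_one[OF group.is_monoid[OF group_at]])
    then show ?thesis using k x kc K_iff by (auto elim: eventually_mono)
  qed
  then show ?thesis using normal_inv_iff K_subgroup by blast
qed

lemma L_group: "group L" unfolding limit_group_def using normal.factorgroup_is_group[OF K_normal] .

definition eta where "eta a = K #> a"

lemma L_carrier: "carrier L = eta ` carrier G"
  unfolding limit_group_def eta_def using carrier_FactGroup by blast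

lemma L_mult: "a \<in> carrier G \<Longrightarrow> b \<in> carrier G \<Longrightarrow> eta a \<otimes>\<^bsub>L\<^esub> eta b = eta (a \<otimes> b)"
  unfolding limit_group_def eta_def using normal.rcos_sum[OF K_normal] by simp

lemma L_one: "\<one>\<^bsub>L\<^esub> = eta \<one>"
  unfolding limit_group_def eta_def using coset_mult_one subgroup.subset[OF K_subgroup] by simp

lemma L_inv: "a \<in> carrier G \<Longrightarrow> inv\<^bsub>L\<^esub> (eta a) = eta (inv a)"
  using normal.inv_FactGroup[OF K_normal, of "eta a"] L_carrier normal.rcos_inv[OF K_normal, of a]
  unfolding limit_group_def eta_def by simp

lemma L_conjugate: "a \<in> carrier G \<Longrightarrow> b \<in> carrier G \<Longrightarrow>
    group.conjugate L (eta a) (eta b) = eta (conjugate a b)"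
  unfolding group.conjugate_def[OF L_group] conjugate_def using L_mult L_inv by simp

lemma eta_eq_iff: assumes "a \<in> carrier G" "b \<in> carrier G"
  shows "eta a = eta b \<longleftrightarrow> (\<forall>\<^sub>F n in sequentially. h n a = h n b)"
proof -
  have "eta a = eta b \<longleftrightarrow> a \<in> K #> b"
    using rcos_self[OF assms(1) K_subgroup] repr_independence[OF _ assms(2) K_subgroup]
    unfolding eta_def by auto
  also have "\<dots> \<longleftrightarrow> a \<otimes> inv b \<in> K" using subgroup.rcos_module[OF K_subgroup is_group assms(2,1)] .
  also have "\<dots> \<longleftrightarrow> (\<forall>\<^sub>F n in sequentially. h n a = h n b)" using K_iff h_eq_iff assms by simp
  finally show ?thesis .
qed

lemma eta_eq_one_iff: "a \<in> carrier G \<Longrightarrow>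
    eta a = \<one>\<^bsub>L\<^esub> \<longleftrightarrow> (\<forall>\<^sub>F n in sequentially. h n a = \<one>\<^bsub>P n\<^esub>)"
  using eta_eq_iff[of a \<one>] L_one h_one by simp

lemma eta_commute_iff: assumes "a \<in> carrier G" "b \<in> carrier G"
  shows "eta a \<otimes>\<^bsub>L\<^esub> eta b = eta b \<otimes>\<^bsub>L\<^esub> eta a \<longleftrightarrow>
    (\<forall>\<^sub>F n in sequentially. h n a \<otimes>\<^bsub>P n\<^esub> h n b = h n b \<otimes>\<^bsub>P n\<^esub> h n a)"
  using assms L_mult eta_eq_iff[of "a \<otimes> b" "b \<otimes> a"] h_mult by simp

lemma eta_in_EL_iff: assumes "a \<in> carrier G"
  shows "eta a \<in> EL \<longleftrightarrow> (\<forall>\<^sub>F n in sequentially. elliptic (P n) (A n) (B n) (h n a))"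
proof
  assume "eta a \<in> EL"
  then obtain g where g: "eta a = eta g" "g \<in> carrier G"
    "\<forall>\<^sub>F n in sequentially. elliptic (P n) (A n) (B n) (h n g)"
    unfolding limit_elliptics_def eta_def by blast
  then have "\<forall>\<^sub>F n in sequentially. h n a = h n g" using eta_eq_iff assms by simp
  then show "\<forall>\<^sub>F n in sequentially. elliptic (P n) (A n) (B n) (h n a)"
    using g(3) by eventually_elim simp
next
  assume "\<forall>\<^sub>F n in sequentially. elliptic (P n) (A n) (B n) (h n a)"
  then show "eta a \<in> EL" unfolding limit_elliptics_def eta_def using assms by blast
qed

lemma eventually_nontrivial: "a \<in> carrier G \<Longrightarrow> eta a \<noteq> \<one>\<^bsub>L\<^esub> \<Longrightarrow>
    \<forall>\<^sub>F n in sequentially. h n a \<noteq> \<one>\<^bsub>P n\<^esub>"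
  using trivial_dichotomy eta_eq_one_iff by blast

lemma eventually_nonelliptic: "a \<in> carrier G \<Longrightarrow> eta a \<notin> EL \<Longrightarrow>
    \<forall>\<^sub>F n in sequentially. \<not> elliptic (P n) (A n) (B n) (h n a)"
  using elliptic_dichotomy eta_in_EL_iff by blast

lemma limit_one_in_E: "\<one>\<^bsub>L\<^esub> \<in> EL"
  using eta_in_EL_iff[of \<one>] L_one h_one free_product.one_elliptic[OF free_product_at] by simp

lemma limit_commute_nonelliptic:
  assumes u: "u \<in> carrier L" and v: "v \<in> carrier L" and nv: "v \<noteq> \<one>\<^bsub>L\<^esub>"
    and c: "u \<otimes>\<^bsub>L\<^esub> v = v \<otimes>\<^bsub>L\<^esub> u" and uE: "u \<notin> EL" shows "v \<notin> EL"
proof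
  assume vE: "v \<in> EL"
  obtain a b where ab: "a \<in> carrier G" "b \<in> carrier G" "u = eta a" "v = eta b"
    using u v L_carrier by auto
  have "\<forall>\<^sub>F n in sequentially. h n b \<noteq> \<one>\<^bsub>P n\<^esub>" using eventually_nontrivial[OF ab(2)] ab nv by simp
  moreover have "\<forall>\<^sub>F n in sequentially. elliptic (P n) (A n) (B n) (h n b)"
    using eta_in_EL_iff[OF ab(2)] ab vE by simp
  moreover have "\<forall>\<^sub>F n in sequentially. \<not> elliptic (P n) (A n) (B n) (h n a)"
    using eventually_nonelliptic[OF ab(1)] ab uE by simp
  moreover have "\<forall>\<^sub>F n in sequentially. h n a \<otimes>\<^bsub>P n\<^esub> h n b = h n b \<otimes>\<^bsub>P n\<^esub> h n a"
    using eta_commute_iff[OF ab(1,2)] ab c by simp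
  ultimately have "\<forall>\<^sub>F n in sequentially. False"
  proof eventually_elim
    case (elim n)
    then show False
      using free_product.commutes_with_elliptic[OF free_product_at h_carrier[OF ab(2)] _ _
          h_carrier[OF ab(1)]] by metis
  qed
  then show False by simp
qed

lemma limit_centralizer_commutative:
  assumes u: "u \<in> carrier L" and v: "v \<in> carrier L" and w: "w \<in> carrier L" and uE: "u \<notin> EL"
    and c1: "v \<otimes>\<^bsub>L\<^esub> u = u \<otimes>\<^bsub>L\<^esub> v" and c2: "w \<otimes>\<^bsub>L\<^esub> u = u \<otimes>\<^bsub>L\<^esub> w"
  shows "v \<otimes>\<^bsub>L\<^esub> w = w \<otimes>\<^bsub>L\<^esub> v"
proof -
  obtain a b c where abc: "a \<in> carrier G" "b \<in> carrier G" "c \<in> carrier G"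
    "u = eta a" "v = eta b" "w = eta c"
    using u v w L_carrier by auto
  have "\<forall>\<^sub>F n in sequentially. \<not> elliptic (P n) (A n) (B n) (h n a)"
    using eventually_nonelliptic[OF abc(1)] abc uE by simp
  moreover have "\<forall>\<^sub>F n in sequentially. h n b \<otimes>\<^bsub>P n\<^esub> h n a = h n a \<otimes>\<^bsub>P n\<^esub> h n b"
    using eta_commute_iff[OF abc(2,1)] abc c1 by simp
  moreover have "\<forall>\<^sub>F n in sequentially. h n c \<otimes>\<^bsub>P n\<^esub> h n a = h n a \<otimes>\<^bsub>P n\<^esub> h n c"
    using eta_commute_iff[OF abc(3,1)] abc c2 by simp
  ultimately have "\<forall>\<^sub>F n in sequentially. h n b \<otimes>\<^bsub>P n\<^esub> h n c = h n c \<otimes>\<^bsub>P n\<^esub> h n b"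
    by eventually_elim (use free_product.nonelliptic_centralizer_commutative[OF free_product_at
          h_carrier[OF abc(1)] _ h_carrier[OF abc(2)] h_carrier[OF abc(3)]] in blast)
  then show ?thesis using eta_commute_iff[OF abc(2,3)] abc by simp
qed

lemma limit_commuting_conjugate:
  assumes u: "u \<in> carrier L" and l: "l \<in> carrier L" and uE: "u \<notin> EL"
    and c: "group.conjugate L l u \<otimes>\<^bsub>L\<^esub> u = u \<otimes>\<^bsub>L\<^esub> group.conjugate L l u"
  shows "group.conjugate L l u = u \<or> group.conjugate L l u = inv\<^bsub>L\<^esub> u"
proof -
  obtain a g where ag: "a \<in> carrier G" "g \<in> carrier G" "u = eta a" "l = eta g"
    using u l L_carrier by auto
  have cg: "conjugate g a \<in> carrier G" using ag by simp
  have "\<forall>\<^sub>F n in sequentially. \<not> elliptic (P n) (A n) (B n) (h n a)"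
    using eventually_nonelliptic[OF ag(1)] ag uE by simp
  moreover have "\<forall>\<^sub>F n in sequentially.
      h n (conjugate g a) \<otimes>\<^bsub>P n\<^esub> h n a = h n a \<otimes>\<^bsub>P n\<^esub> h n (conjugate g a)"
    using eta_commute_iff[OF cg ag(1)] ag c L_conjugate by simp
  ultimately have fixes_or_inverts:
    "\<forall>\<^sub>F n in sequentially. h n (conjugate g a) = h n a \<or> h n (conjugate g a) = h n (inv a)"
    by eventually_elim (use free_product.nonelliptic_commuting_conjugate[OF free_product_at
          h_carrier[OF ag(1)] _ h_carrier[OF ag(2)]] h_conjugate[OF ag(2,1)] h_inv[OF ag(1)]
        in auto)
  consider "\<forall>\<^sub>F n in sequentially. h n (conjugate g a) = h n a"
    | "\<forall>\<^sub>F n in sequentially. h n (conjugate g a) \<noteq> h n a"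
    using equation_dichotomy[OF cg ag(1)] by blast
  then show ?thesis
  proof cases
    case 1
    then have "eta (conjugate g a) = eta a" using eta_eq_iff[OF cg ag(1)] by simp
    then show ?thesis using L_conjugate ag by simp
  next
    case 2
    with fixes_or_inverts have "\<forall>\<^sub>F n in sequentially. h n (conjugate g a) = h n (inv a)"
      by eventually_elim auto
    then have "eta (conjugate g a) = eta (inv a)" using eta_eq_iff[OF cg] ag by simp
    then show ?thesis using L_conjugate ag L_inv by simp
  qed
qed

lemma limit_inverting_conjugate:
  assumes u: "u \<in> carrier L" and l: "l \<in> carrier L" and uE: "u \<notin> EL"
    and c: "group.conjugate L l u = inv\<^bsub>L\<^esub> u"
  shows "l \<in> EL \<and> l \<otimes>\<^bsub>L\<^esub> l = \<one>\<^bsub>L\<^esub> \<and>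
    (\<forall>z\<in>carrier L. z \<otimes>\<^bsub>L\<^esub> u = u \<otimes>\<^bsub>L\<^esub> z \<longrightarrow> group.conjugate L l z = inv\<^bsub>L\<^esub> z)"
proof -
  obtain a g where ag: "a \<in> carrier G" "g \<in> carrier G" "u = eta a" "l = eta g"
    using u l L_carrier by auto
  have cg: "conjugate g a \<in> carrier G" using ag by simp
  have "\<forall>\<^sub>F n in sequentially. \<not> elliptic (P n) (A n) (B n) (h n a)"
    using eventually_nonelliptic[OF ag(1)] ag uE by simp
  moreover have "\<forall>\<^sub>F n in sequentially. h n (conjugate g a) = h n (inv a)"
    using c L_conjugate ag L_inv eta_eq_iff[OF cg] by simp
  ultimately have ev: "\<forall>\<^sub>F n in sequentially. elliptic (P n) (A n) (B n) (h n g) \<and>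
      h n g \<otimes>\<^bsub>P n\<^esub> h n g = \<one>\<^bsub>P n\<^esub> \<and>
      (\<forall>z\<in>carrier (P n). z \<otimes>\<^bsub>P n\<^esub> h n a = h n a \<otimes>\<^bsub>P n\<^esub> z \<longrightarrow>
         group.conjugate (P n) (h n g) z = inv\<^bsub>P n\<^esub> z)"
    by eventually_elim (use free_product.nonelliptic_inverting_conjugate[OF free_product_at
          h_carrier[OF ag(1)] _ h_carrier[OF ag(2)]] h_conjugate[OF ag(2,1)] h_inv[OF ag(1)]
        in auto)
  have "\<forall>\<^sub>F n in sequentially. elliptic (P n) (A n) (B n) (h n g)"
    using ev by eventually_elim simp
  then have "l \<in> EL" using eta_in_EL_iff[OF ag(2)] ag by simp
  moreover have "\<forall>\<^sub>F n in sequentially. h n (g \<otimes> g) = \<one>\<^bsub>P n\<^esub>"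
    using ev by eventually_elim (simp add: h_mult[OF ag(2) ag(2)])
  then have "l \<otimes>\<^bsub>L\<^esub> l = \<one>\<^bsub>L\<^esub>" using eta_eq_one_iff L_mult ag by simp
  moreover have "group.conjugate L l z = inv\<^bsub>L\<^esub> z"
    if z: "z \<in> carrier L" and zu: "z \<otimes>\<^bsub>L\<^esub> u = u \<otimes>\<^bsub>L\<^esub> z" for z
  proof -
    obtain b where b: "b \<in> carrier G" "z = eta b" using z L_carrier by auto
    have cb: "conjugate g b \<in> carrier G" using ag b by simp
    have "\<forall>\<^sub>F n in sequentially. h n b \<otimes>\<^bsub>P n\<^esub> h n a = h n a \<otimes>\<^bsub>P n\<^esub> h n b"
      using eta_commute_iff[OF b(1) ag(1)] zu b ag by simp
    then have "\<forall>\<^sub>F n in sequentially. h n (conjugate g b) = h n (inv b)"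
      using ev by eventually_elim
        (use h_conjugate[OF ag(2) b(1)] h_inv[OF b(1)] h_carrier[OF b(1)] in auto)
    then have "eta (conjugate g b) = eta (inv b)" using eta_eq_iff[OF cb] b by simp
    then show ?thesis using L_conjugate ag b L_inv by simp
  qed
  ultimately show ?thesis by blast
qed

theorem limit_elliptic_structure: "elliptic_structure L EL"
  by (intro elliptic_structure.intro elliptic_structure_axioms.intro L_group limit_one_in_E)
    (fact limit_commute_nonelliptic limit_centralizer_commutative limit_commuting_conjugate
       limit_inverting_conjugate)+

end
theorem lemma4:
  fixes G :: "('a, 'm) monoid_scheme"
    and P :: "nat \<Rightarrow> ('b, 'k) monoid_scheme"
    and A B :: "nat \<Rightarrow> 'b set"
    and h :: "nat \<Rightarrow> 'a \<Rightarrow> 'b"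
    and L :: "'a set monoid" and E :: "'a set set"
  assumes "group G" and "finitely_generated G"
    and "convergent_seq G P A B h"
    and L_def: "L = limit_group G P h"
    and E_def: "E = limit_elliptics G P A B h"
  shows
    "(\<forall>u1\<in>carrier L. \<forall>u2\<in>carrier L. \<forall>u3\<in>carrier L.
        u1 \<noteq> \<one>\<^bsub>L\<^esub> \<and> u2 \<noteq> \<one>\<^bsub>L\<^esub> \<and> u3 \<noteq> \<one>\<^bsub>L\<^esub> \<and>
        (u1 \<notin> E \<or> u2 \<notin> E \<or> u3 \<notin> E) \<and>
        commutator L u1 u2 = \<one>\<^bsub>L\<^esub> \<and> commutator L u1 u3 = \<one>\<^bsub>L\<^esub>
        \<longrightarrow> u1 \<notin> E \<and> u2 \<notin> E \<and> u3 \<notin> E \<and> commutator L u2 u3 = \<one>\<^bsub>L\<^esub>)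
     \<and>
     (\<forall>Ab. subgroup Ab L \<and> abelian_set L Ab \<and> Ab \<noteq> {\<one>\<^bsub>L\<^esub>} \<and> \<not> Ab \<subseteq> E \<longrightarrow>
        (max_abelian_subgroup L (centralizer L Ab) \<and> Ab \<subseteq> centralizer L Ab \<and>
         (\<forall>M. max_abelian_subgroup L M \<and> Ab \<subseteq> M \<longrightarrow> M = centralizer L Ab) \<and>
         centralizer L Ab \<inter> E = {\<one>\<^bsub>L\<^esub>})
        \<and>
        (let C = centralizer L Ab; N = normalizer L Ab;
             I = {C #>\<^bsub>L\<^esub> g | g. g \<in> N} in
          finite I \<and> card I \<le> 2 \<and>
          (\<forall>l \<in> carrier L - N. (l <#\<^bsub>L\<^esub> C #>\<^bsub>L\<^esub> inv\<^bsub>L\<^esub> l) \<inter> Ab = {\<one>\<^bsub>L\<^esub>}) \<and>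
          (card I = 2 \<longrightarrow>
             (\<exists>e\<in>N. e \<in> E \<and> group.ord L e = 2 \<and>
                generate L (C \<union> {e}) = N \<and>
                (\<forall>c\<in>C. e \<otimes>\<^bsub>L\<^esub> c \<otimes>\<^bsub>L\<^esub> inv\<^bsub>L\<^esub> e = inv\<^bsub>L\<^esub> c)))))"
proof -
  interpret convergent_limit G P A B h
    using assms(1,3) by (simp add: convergent_limit_def convergent_limit_axioms_def)
  interpret lim: elliptic_structure L E
    unfolding L_def E_def by (rule limit_elliptic_structure)
  show ?thesis
  proof (rule conjI; intro ballI allI impI; elim conjE)
  qed (rule lim.commuting_triple lim.abelian_subgroup_structure; assumption)+
qed

end
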